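(* Let $\mathcal{T}:\mathcal{M}_d\to\mathcal{M}_d$ and $\mathcal{S}:\mathcal{M}_{d'}\to\mathcal{M}_{d'}$ be quantum channels with peripheral projections $\mathcal{T}_P$, $\mathcal{S}_P$ and peripheral subspaces $\chi_{\mathcal{T}}$, $\chi_{\mathcal{S}}$. Then the peripheral projection of $\mathcal{T}\otimes\mathcal{S}$ is $(\mathcal{T}\otimes\mathcal{S})_P=\mathcal{T}_P\otimes\mathcal{S}_P$, and its peripheral subspace is $\chi_{\mathcal{T}\otimes\mathcal{S}}=\chi_{\mathcal{T}}\otimes\chi_{\mathcal{S}}$.
   Context: A quantum channel is a completely positive trace-preserving linear map. The peripheral subspace of a channel $\mathcal{T}$ is $\chi_{\mathcal{T}}=\mathrm{span}\{X:\mathcal{T}(X)=\lambda X,\ |\lambda|=1\}$. Writing the Jordan decomposition of $\mathcal{T}$ as $\mathcal{T}=\sum_\ell(\lambda_\ell\mathcal{P}_\ell+\mathcal{N}_\ell)$ with spectral projections $\mathcal{P}_\ell$ and nilpotents $\mathcal{N}_\ell$, the peripheral projection is $\mathcal{T}_P=\sum_{\ell:|\lambda_\ell|=1}\mathcal{P}_\ell$; it is a channel with $\mathcal{T}_P(\mathcal{M}_d)=\chi_{\mathcal{T}}$, $\mathcal{T}_P(X)=X$ for $X\in\chi_{\mathcal{T}}$, and $\mathcal{T}_P=\lim_{i\to\infty}\mathcal{T}^{t_i}$ for some increasing sequence of integers $t_i$. *)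

theory Defs
  imports Complex_Main "Jordan_Normal_Form.Matrix"
begin

text \<open>M_d is modelled as carrier_mat d d of complex matrices; a linear map on M_d
  is a function complex mat => complex mat, only its values on carrier_mat d d matter.\<close>

definition mat_trace :: "complex mat \<Rightarrow> complex" where
  "mat_trace A = (\<Sum>i<dim_row A. A $$ (i, i))"

definition mat_unit :: "nat \<Rightarrow> nat \<Rightarrow> nat \<Rightarrow> complex mat" where
  "mat_unit d i j = mat d d (\<lambda>(p, q). if p = i \<and> q = j then 1 else 0)"

text \<open>Kronecker product; index (i,k) of M_d (x) M_d' corresponds to i*d'+k.\<close>
definition mat_kron :: "complex mat \<Rightarrow> complex mat \<Rightarrow> complex mat" where
  "mat_kron A B = mat (dim_row A * dim_row B) (dim_col A * dim_col B)
     (\<lambda>(p, q). A $$ (p div dim_row B, q div dim_col B) * B $$ (p mod dim_row B, q mod dim_col B))"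

text \<open>Tensor product of linear maps T on M_d and S on M_d': the linear map on M_(d*d')
  determined by (T (x) S)(E_ij (x) E_kl) = T(E_ij) (x) S(E_kl).\<close>
definition tensor_map :: "nat \<Rightarrow> nat \<Rightarrow> (complex mat \<Rightarrow> complex mat) \<Rightarrow> (complex mat \<Rightarrow> complex mat)
    \<Rightarrow> complex mat \<Rightarrow> complex mat" where
  "tensor_map d d' T S X = mat (d * d') (d * d') (\<lambda>(p, q).
     \<Sum>i<d. \<Sum>j<d. \<Sum>k<d'. \<Sum>l<d'.
       X $$ (i * d' + k, j * d' + l) * mat_kron (T (mat_unit d i j)) (S (mat_unit d' k l)) $$ (p, q))"

definition lin_map :: "nat \<Rightarrow> (complex mat \<Rightarrow> complex mat) \<Rightarrow> bool" where
  "lin_map d T \<longleftrightarrow>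
     (\<forall>X \<in> carrier_mat d d. T X \<in> carrier_mat d d) \<and>
     (\<forall>X \<in> carrier_mat d d. \<forall>Y \<in> carrier_mat d d. T (X + Y) = T X + T Y) \<and>
     (\<forall>X \<in> carrier_mat d d. \<forall>c. T (c \<cdot>\<^sub>m X) = c \<cdot>\<^sub>m T X)"

definition mat_psd :: "nat \<Rightarrow> complex mat \<Rightarrow> bool" where
  "mat_psd n A \<longleftrightarrow> A \<in> carrier_mat n n \<and>
     (\<forall>v \<in> carrier_vec n. let z = conjugate v \<bullet> (A *\<^sub>v v) in Im z = 0 \<and> Re z \<ge> 0)"

definition completely_positive :: "nat \<Rightarrow> (complex mat \<Rightarrow> complex mat) \<Rightarrow> bool" where
  "completely_positive d T \<longleftrightarrow>
     (\<forall>k. \<forall>X. mat_psd (d * k) X \<longrightarrow> mat_psd (d * k) (tensor_map d k T id X))"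

definition trace_preserving :: "nat \<Rightarrow> (complex mat \<Rightarrow> complex mat) \<Rightarrow> bool" where
  "trace_preserving d T \<longleftrightarrow> (\<forall>X \<in> carrier_mat d d. mat_trace (T X) = mat_trace X)"

definition quantum_channel :: "nat \<Rightarrow> (complex mat \<Rightarrow> complex mat) \<Rightarrow> bool" where
  "quantum_channel d T \<longleftrightarrow> lin_map d T \<and> completely_positive d T \<and> trace_preserving d T"

definition mat_span :: "nat \<Rightarrow> complex mat set \<Rightarrow> complex mat set" where
  "mat_span d A = {X \<in> carrier_mat d d. \<exists>(n::nat) c v. (\<forall>i<n. v i \<in> A) \<and>
     (\<forall>p<d. \<forall>q<d. X $$ (p, q) = (\<Sum>i<n. c i * v i $$ (p, q)))}"

definition peripheral_subspace :: "nat \<Rightarrow> (complex mat \<Rightarrow> complex mat) \<Rightarrow> complex mat set" where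
  "peripheral_subspace d T =
     mat_span d {X \<in> carrier_mat d d. \<exists>c. cmod c = 1 \<and> T X = c \<cdot>\<^sub>m X}"

text \<open>Generalized eigenspace ker (T - \<lambda> id)^(d^2), i.e. the range of the spectral projection P_\<lambda>.\<close>
definition gen_eigenspace :: "nat \<Rightarrow> (complex mat \<Rightarrow> complex mat) \<Rightarrow> complex \<Rightarrow> complex mat set" where
  "gen_eigenspace d T c = {X \<in> carrier_mat d d.
     ((\<lambda>Y. T Y - c \<cdot>\<^sub>m Y) ^^ (d * d)) X = 0\<^sub>m d d}"

text \<open>Peripheral projection T_P = sum of the spectral projections P_\<lambda> with |\<lambda>| = 1:
  the linear idempotent on M_d whose range is the sum of the generalized eigenspaces
  for |\<lambda>| = 1 and whose kernel is the sum of the other generalized eigenspaces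
  (normalised to 0 outside M_d so that it is unique).\<close>
definition peripheral_projection :: "nat \<Rightarrow> (complex mat \<Rightarrow> complex mat) \<Rightarrow> complex mat \<Rightarrow> complex mat" where
  "peripheral_projection d T = (THE P. lin_map d P \<and>
     (\<forall>X. X \<notin> carrier_mat d d \<longrightarrow> P X = 0\<^sub>m d d) \<and>
     (\<forall>X \<in> carrier_mat d d. P (P X) = P X) \<and>
     P ` carrier_mat d d = mat_span d (\<Union>c\<in>{c. cmod c = 1}. gen_eigenspace d T c) \<and>
     {X \<in> carrier_mat d d. P X = 0\<^sub>m d d} = mat_span d (\<Union>c\<in>{c. cmod c \<noteq> 1}. gen_eigenspace d T c))"

definition tensor_subspace :: "nat \<Rightarrow> nat \<Rightarrow> complex mat set \<Rightarrow> complex mat set \<Rightarrow> complex mat set" where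
  "tensor_subspace d d' U V = mat_span (d * d') {mat_kron A B | A B. A \<in> U \<and> B \<in> V}"

end

theory Submission
  imports Defs "Jordan_Normal_Form.Schur_Decomposition" "HOL-Computational_Algebra.Field_as_Ring"
begin

text \<open>A linear map \<open>L\<close> on \<open>M\<^sub>n\<close> has an annihilating polynomial that splits into linear
  factors (Cayley--Hamilton via the Schur decomposition), so by Bezout \<open>M\<^sub>n\<close> is the sum of the
  generalized eigenspaces of \<open>L\<close>, and the peripheral projection is the linear map that is the
  identity on those with unimodular eigenvalue and zero on the others.
  For a channel, positivity and trace preservation bound the entries of all powers \<open>T\<^sup>k\<close>; hence
  every eigenvalue has modulus at most \<open>1\<close> and generalized eigenvectors for unimodular
  eigenvalues are eigenvectors, so the peripheral subspace is the range of \<open>T\<^sub>P\<close>.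
  If \<open>A\<close> and \<open>B\<close> are generalized eigenvectors of \<open>T\<close> and \<open>S\<close> for \<open>c\<close> and \<open>e\<close>, then
  \<open>A \<otimes> B\<close> is one of \<open>T \<otimes> S\<close> for \<open>c e\<close>, and \<open>|c e| = 1\<close> iff \<open>|c| = |e| = 1\<close>; so
  \<open>(T \<otimes> S)\<^sub>P\<close> and \<open>T\<^sub>P \<otimes> S\<^sub>P\<close> agree on these products, which span \<open>M\<^bsub>d d'\<^esub>\<close>.
  The description of the peripheral subspaces follows from this and from the fact that Kronecker
  products of unimodular eigenvectors are unimodular eigenvectors.\<close>

section \<open>Sums, subspaces and spans of square matrices\<close>

definition mat_sum :: "nat \<Rightarrow> ('i \<Rightarrow> complex mat) \<Rightarrow> 'i set \<Rightarrow> complex mat" where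
  "mat_sum n f I = mat n n (\<lambda>(p, q). \<Sum>i\<in>I. f i $$ (p, q))"

lemma mat_sum_carrier[simp]: "mat_sum n f I \<in> carrier_mat n n"
  unfolding mat_sum_def by auto

lemma mat_sum_dims[simp]: "dim_row (mat_sum n f I) = n" "dim_col (mat_sum n f I) = n"
  unfolding mat_sum_def by auto

lemma mat_sum_index: "p < n \<Longrightarrow> q < n \<Longrightarrow> mat_sum n f I $$ (p, q) = (\<Sum>i\<in>I. f i $$ (p, q))"
  unfolding mat_sum_def by auto

lemma mat_sum_cong: "(\<And>i. i \<in> I \<Longrightarrow> f i = g i) \<Longrightarrow> mat_sum n f I = mat_sum n g I"
  unfolding mat_sum_def by (auto intro!: cong_mat sum.cong)

lemma mat_sum_zero: "(\<And>i. i \<in> I \<Longrightarrow> f i = 0\<^sub>m n n) \<Longrightarrow> mat_sum n f I = 0\<^sub>m n n"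
  by (rule eq_matI) (auto simp: mat_sum_index)

lemma mat_sum_empty[simp]: "mat_sum n f {} = 0\<^sub>m n n"
  by (rule mat_sum_zero) simp

lemma mat_sum_insert: assumes "finite I" "x \<notin> I" "f x \<in> carrier_mat n n"
  shows "mat_sum n f (insert x I) = f x + mat_sum n f I"
  by (rule eq_matI) (use assms in \<open>auto simp: mat_sum_index\<close>)

lemma mat_sum_Int_Diff: "finite I \<Longrightarrow> mat_sum n f I = mat_sum n f (I \<inter> J) + mat_sum n f (I - J)"
  by (rule eq_matI) (auto simp: mat_sum_index intro: sum.Int_Diff)

definition mat_subspace :: "nat \<Rightarrow> complex mat set \<Rightarrow> bool" where
  "mat_subspace n W \<longleftrightarrow> W \<subseteq> carrier_mat n n \<and> 0\<^sub>m n n \<in> W \<and>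
     (\<forall>X\<in>W. \<forall>Y\<in>W. X + Y \<in> W) \<and> (\<forall>X\<in>W. \<forall>c. c \<cdot>\<^sub>m X \<in> W)"

lemma mat_subspaceD: assumes "mat_subspace n W"
  shows "W \<subseteq> carrier_mat n n" "0\<^sub>m n n \<in> W" "X \<in> W \<Longrightarrow> Y \<in> W \<Longrightarrow> X + Y \<in> W"
    "X \<in> W \<Longrightarrow> c \<cdot>\<^sub>m X \<in> W"
  using assms unfolding mat_subspace_def by auto

lemma mat_subspace_zero: "mat_subspace n {0\<^sub>m n n}"
  unfolding mat_subspace_def by auto

lemma mat_subspace_mat_sum: assumes W: "mat_subspace n W" and "finite I"
  and f: "\<And>i. i \<in> I \<Longrightarrow> f i \<in> W"
  shows "mat_sum n f I \<in> W"
  using \<open>finite I\<close> f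
proof (induction I rule: finite_induct)
  case empty
  show ?case using mat_subspaceD(2)[OF W] by simp
next
  case (insert x F)
  have "f x \<in> carrier_mat n n" using insert.prems mat_subspaceD(1)[OF W] by auto
  thus ?case using insert by (simp add: mat_sum_insert mat_subspaceD(3)[OF W])
qed

lemma sum_lessThan_add:
  "(\<Sum>i<k + m. g i) = (\<Sum>i<k. g i) + (\<Sum>i<m. g (i + k))" for g :: "nat \<Rightarrow> 'a :: comm_monoid_add"
  by (induction m) (auto simp: add.commute add.left_commute)

lemma mat_span_base: "X \<in> A \<Longrightarrow> X \<in> carrier_mat n n \<Longrightarrow> X \<in> mat_span n A"
  unfolding mat_span_def
  by (auto intro!: exI[of _ "1::nat"] exI[of _ "\<lambda>_. 1"] exI[of _ "\<lambda>_. X"])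

lemma mat_span_mono: "A \<subseteq> B \<Longrightarrow> mat_span n A \<subseteq> mat_span n B"
  unfolding mat_span_def by blast

lemma mat_subspace_span: "mat_subspace n (mat_span n A)"
  unfolding mat_subspace_def
proof (intro conjI ballI allI)
  show "mat_span n A \<subseteq> carrier_mat n n" unfolding mat_span_def by auto
  show "0\<^sub>m n n \<in> mat_span n A" unfolding mat_span_def
    by (auto intro!: exI[of _ "0::nat"])
next
  fix X c assume "X \<in> mat_span n A"
  then obtain k :: nat and a v where X: "X \<in> carrier_mat n n" "\<forall>i<k. v i \<in> A"
    "\<forall>p<n. \<forall>q<n. X $$ (p, q) = (\<Sum>i<k. a i * v i $$ (p, q))"
    unfolding mat_span_def by blast
  show "c \<cdot>\<^sub>m X \<in> mat_span n A" unfolding mat_span_def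
    using X by (auto intro!: exI[of _ k] exI[of _ "\<lambda>i. c * a i"] exI[of _ v]
        simp: sum_distrib_left mult.assoc)
next
  fix X Y assume "X \<in> mat_span n A" "Y \<in> mat_span n A"
  then obtain k1 k2 :: nat and a1 v1 a2 v2 where X: "X \<in> carrier_mat n n" "\<forall>i<k1. v1 i \<in> A"
    "\<forall>p<n. \<forall>q<n. X $$ (p, q) = (\<Sum>i<k1. a1 i * v1 i $$ (p, q))"
    and Y: "Y \<in> carrier_mat n n" "\<forall>i<k2. v2 i \<in> A"
    "\<forall>p<n. \<forall>q<n. Y $$ (p, q) = (\<Sum>i<k2. a2 i * v2 i $$ (p, q))"
    unfolding mat_span_def by blast
  define v where "v i = (if i < k1 then v1 i else v2 (i - k1))" for i
  define a where "a i = (if i < k1 then a1 i else a2 (i - k1))" for i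
  have "(X + Y) $$ (p, q) = (\<Sum>i<k1 + k2. a i * v i $$ (p, q))" if pq: "p < n" "q < n" for p q
    using X Y pq by (simp add: sum_lessThan_add a_def v_def)
  moreover have "\<forall>i<k1 + k2. v i \<in> A" using X Y unfolding v_def by auto
  ultimately show "X + Y \<in> mat_span n A"
    using X Y unfolding mat_span_def by (auto intro!: exI[of _ "k1 + k2"] exI[of _ a] exI[of _ v])
qed

lemma mat_span_minimal: assumes W: "mat_subspace n W" and AW: "A \<subseteq> W"
  shows "mat_span n A \<subseteq> W"
proof
  fix X assume "X \<in> mat_span n A"
  then obtain k :: nat and a v where X: "X \<in> carrier_mat n n" "\<forall>i<k. v i \<in> A"
    "\<forall>p<n. \<forall>q<n. X $$ (p, q) = (\<Sum>i<k. a i * v i $$ (p, q))"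
    unfolding mat_span_def by blast
  have vC: "dim_row (v i) = n \<and> dim_col (v i) = n" if "i < k" for i
    using that X(2) AW mat_subspaceD(1)[OF W] by auto
  have "X = mat_sum n (\<lambda>i. a i \<cdot>\<^sub>m v i) {..<k}"
    by (rule eq_matI) (use X vC in \<open>auto simp: mat_sum_index intro!: sum.cong\<close>)
  also have "\<dots> \<in> W"
    by (rule mat_subspace_mat_sum[OF W]) (use X(2) AW mat_subspaceD(4)[OF W] in auto)
  finally show "X \<in> W" .
qed

lemma mat_span_subset_span: "A \<subseteq> mat_span n B \<Longrightarrow> mat_span n A \<subseteq> mat_span n B"
  by (rule mat_span_minimal[OF mat_subspace_span])

section \<open>Linear maps on square matrices\<close>

lemma lin_mapD: assumes "lin_map n L"
  shows "X \<in> carrier_mat n n \<Longrightarrow> L X \<in> carrier_mat n n"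
    "X \<in> carrier_mat n n \<Longrightarrow> Y \<in> carrier_mat n n \<Longrightarrow> L (X + Y) = L X + L Y"
    "X \<in> carrier_mat n n \<Longrightarrow> L (c \<cdot>\<^sub>m X) = c \<cdot>\<^sub>m L X"
  using assms unfolding lin_map_def by auto

lemma lin_map_zero: assumes L: "lin_map n L" shows "L (0\<^sub>m n n) = 0\<^sub>m n n"
proof -
  have "L (0\<^sub>m n n) = L ((0::complex) \<cdot>\<^sub>m 0\<^sub>m n n)" by simp
  also have "\<dots> = (0::complex) \<cdot>\<^sub>m L (0\<^sub>m n n)" by (rule lin_mapD(3)[OF L]) simp
  also have "\<dots> = 0\<^sub>m n n" using lin_mapD(1)[OF L, of "0\<^sub>m n n"] by (intro eq_matI) auto
  finally show ?thesis .
qed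

lemma lin_map_mat_sum: assumes L: "lin_map n L" and "finite I"
  and f: "\<And>i. i \<in> I \<Longrightarrow> f i \<in> carrier_mat n n"
  shows "L (mat_sum n f I) = mat_sum n (\<lambda>i. L (f i)) I"
  using \<open>finite I\<close> f
proof (induction I rule: finite_induct)
  case empty show ?case using lin_map_zero[OF L] by simp
next
  case (insert x F)
  have "L (mat_sum n f (insert x F)) = L (f x) + L (mat_sum n f F)"
    using insert by (simp add: mat_sum_insert lin_mapD(2)[OF L])
  also have "\<dots> = mat_sum n (\<lambda>i. L (f i)) (insert x F)"
    using insert lin_mapD(1)[OF L] by (simp add: mat_sum_insert)
  finally show ?case .
qed

lemma lin_map_funpow: "lin_map n L \<Longrightarrow> lin_map n (L ^^ k)"
  by (induction k) (auto simp: lin_map_def)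

lemma lin_map_funpow_zero: "lin_map n L \<Longrightarrow> (L ^^ k) (0\<^sub>m n n) = 0\<^sub>m n n"
  by (rule lin_map_zero[OF lin_map_funpow])

lemma lin_map_shift: assumes L: "lin_map n L" shows "lin_map n (\<lambda>Y. L Y - c \<cdot>\<^sub>m Y)"
  unfolding lin_map_def
proof (intro conjI ballI allI)
  fix X :: "complex mat" assume X: "X \<in> carrier_mat n n"
  show "L X - c \<cdot>\<^sub>m X \<in> carrier_mat n n" using X by (simp add: minus_carrier_mat)
next
  fix X Y :: "complex mat" assume X: "X \<in> carrier_mat n n" and Y: "Y \<in> carrier_mat n n"
  show "L (X + Y) - c \<cdot>\<^sub>m (X + Y) = L X - c \<cdot>\<^sub>m X + (L Y - c \<cdot>\<^sub>m Y)"
    unfolding lin_mapD(2)[OF L X Y] using lin_mapD(1)[OF L X] lin_mapD(1)[OF L Y] X Y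
    by (intro eq_matI) (auto simp: algebra_simps)
next
  fix X :: "complex mat" and a assume X: "X \<in> carrier_mat n n"
  show "L (a \<cdot>\<^sub>m X) - c \<cdot>\<^sub>m (a \<cdot>\<^sub>m X) = a \<cdot>\<^sub>m (L X - c \<cdot>\<^sub>m X)"
    unfolding lin_mapD(3)[OF L X] using lin_mapD(1)[OF L X] X
    by (intro eq_matI) (auto simp: algebra_simps)
qed

lemma lin_map_shift_eq_0_iff: assumes L: "lin_map n L" and Y: "Y \<in> carrier_mat n n"
  shows "L Y - c \<cdot>\<^sub>m Y = 0\<^sub>m n n \<longleftrightarrow> L Y = c \<cdot>\<^sub>m Y"
proof
  assume "L Y - c \<cdot>\<^sub>m Y = 0\<^sub>m n n"
  hence "(L Y - c \<cdot>\<^sub>m Y) $$ (i, j) = 0" if "i < n" "j < n" for i j using that by simp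
  thus "L Y = c \<cdot>\<^sub>m Y" using lin_mapD(1)[OF L Y] Y by (intro eq_matI) auto
qed (use lin_mapD(1)[OF L Y] Y in \<open>auto intro!: eq_matI\<close>)

lemma mat_subspace_equalizer: assumes L: "lin_map n L" and M: "lin_map n M"
  shows "mat_subspace n {X \<in> carrier_mat n n. L X = M X}"
  unfolding mat_subspace_def using lin_mapD[OF L] lin_mapD[OF M] lin_map_zero[OF L] lin_map_zero[OF M]
  by auto

lemma lin_map_eq_on_span: assumes "lin_map n L" "lin_map n M"
  and "A \<subseteq> carrier_mat n n" "\<And>X. X \<in> A \<Longrightarrow> L X = M X" and "X \<in> mat_span n A"
  shows "L X = M X"
  using mat_span_minimal[OF mat_subspace_equalizer[OF assms(1,2)], of A] assms(3-5) by blast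

lemma mat_subspace_preimage: assumes L: "lin_map n L" and V: "mat_subspace n V"
  shows "mat_subspace n {Y \<in> carrier_mat n n. L Y \<in> V}"
  unfolding mat_subspace_def using lin_mapD[OF L] lin_map_zero[OF L] mat_subspaceD[OF V] by auto

lemma mat_unit_carrier[simp]: "mat_unit n i j \<in> carrier_mat n n"
  unfolding mat_unit_def by auto

lemma mat_unit_dims[simp]: "dim_row (mat_unit n i j) = n" "dim_col (mat_unit n i j) = n"
  unfolding mat_unit_def by auto

lemma mat_unit_index: "p < n \<Longrightarrow> q < n \<Longrightarrow> mat_unit n i j $$ (p, q) = (if p = i \<and> q = j then 1 else 0)"
  unfolding mat_unit_def by auto

lemma mat_eq_sum_mat_units: assumes X: "X \<in> carrier_mat n n"
  shows "X = mat_sum n (\<lambda>(i, j). X $$ (i, j) \<cdot>\<^sub>m mat_unit n i j) ({..<n} \<times> {..<n})"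
proof (rule eq_matI)
  fix p q assume "p < dim_row (mat_sum n (\<lambda>(i, j). X $$ (i, j) \<cdot>\<^sub>m mat_unit n i j) ({..<n} \<times> {..<n}))"
    "q < dim_col (mat_sum n (\<lambda>(i, j). X $$ (i, j) \<cdot>\<^sub>m mat_unit n i j) ({..<n} \<times> {..<n}))"
  hence pq: "p < n" "q < n" by auto
  have "mat_sum n (\<lambda>(i, j). X $$ (i, j) \<cdot>\<^sub>m mat_unit n i j) ({..<n} \<times> {..<n}) $$ (p, q)
      = (\<Sum>ij\<in>{..<n} \<times> {..<n}. if ij = (p, q) then X $$ (p, q) else 0)"
    unfolding mat_sum_index[OF pq] using pq
    by (intro sum.cong refl) (auto simp: mat_unit_index split: if_splits)
  also have "\<dots> = X $$ (p, q)" using pq by simp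
  finally show "X $$ (p, q) = mat_sum n (\<lambda>(i, j). X $$ (i, j) \<cdot>\<^sub>m mat_unit n i j) ({..<n} \<times> {..<n}) $$ (p, q)"
    by simp
qed (use X in auto)

lemma carrier_subset_span_mat_units:
  "carrier_mat n n \<subseteq> mat_span n {mat_unit n i j | i j. i < n \<and> j < n}"
proof
  fix X :: "complex mat" assume X: "X \<in> carrier_mat n n"
  have "mat_sum n (\<lambda>(i, j). X $$ (i, j) \<cdot>\<^sub>m mat_unit n i j) ({..<n} \<times> {..<n})
      \<in> mat_span n {mat_unit n i j | i j. i < n \<and> j < n}"
    by (rule mat_subspace_mat_sum[OF mat_subspace_span])
      (auto intro!: mat_subspaceD(4)[OF mat_subspace_span] mat_span_base)
  thus "X \<in> mat_span n {mat_unit n i j | i j. i < n \<and> j < n}"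
    using mat_eq_sum_mat_units[OF X] by simp
qed

lemma lin_map_index: assumes L: "lin_map n L" and X: "X \<in> carrier_mat n n" and pq: "p < n" "q < n"
  shows "L X $$ (p, q) = (\<Sum>i<n. \<Sum>j<n. X $$ (i, j) * L (mat_unit n i j) $$ (p, q))"
proof -
  have units: "dim_row (L (mat_unit n i j)) = n \<and> dim_col (L (mat_unit n i j)) = n" for i j
    using lin_mapD(1)[OF L mat_unit_carrier] by auto
  have "L X = mat_sum n (\<lambda>ij. L (case ij of (i, j) \<Rightarrow> X $$ (i, j) \<cdot>\<^sub>m mat_unit n i j)) ({..<n} \<times> {..<n})"
    by (subst mat_eq_sum_mat_units[OF X]) (rule lin_map_mat_sum[OF L], auto)
  hence "L X $$ (p, q) = (\<Sum>(i, j)\<in>{..<n} \<times> {..<n}. X $$ (i, j) * L (mat_unit n i j) $$ (p, q))"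
    using pq units by (auto simp: mat_sum_index lin_mapD(3)[OF L] intro!: sum.cong)
  thus ?thesis by (simp add: sum.cartesian_product)
qed

lemma gen_eigenspace_carrier: "X \<in> gen_eigenspace n L c \<Longrightarrow> X \<in> carrier_mat n n"
  unfolding gen_eigenspace_def by auto

lemma gen_eigenspace_funpow_shift: assumes L: "lin_map n L" and Z: "Z \<in> gen_eigenspace n L c"
  and "n * n \<le> i"
  shows "((\<lambda>Y. L Y - c \<cdot>\<^sub>m Y) ^^ i) Z = 0\<^sub>m n n"
proof -
  obtain k where "i = k + n * n" using \<open>n * n \<le> i\<close> le_iff_add by (metis add.commute)
  thus ?thesis using Z lin_map_funpow_zero[OF lin_map_shift[OF L]]
    unfolding gen_eigenspace_def by (simp add: funpow_add)
qed

lemma eigenvector_in_gen_eigenspace: assumes L: "lin_map n L"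
  and Y: "Y \<in> carrier_mat n n" and eig: "L Y = c \<cdot>\<^sub>m Y"
  shows "Y \<in> gen_eigenspace n L c"
proof (cases "n = 0")
  case True thus ?thesis using Y unfolding gen_eigenspace_def by (auto intro!: eq_matI)
next
  case False
  then obtain m where m: "n * n = Suc m" by (cases "n * n") auto
  have "L Y - c \<cdot>\<^sub>m Y = 0\<^sub>m n n" using lin_map_shift_eq_0_iff[OF L Y] eig by simp
  hence "((\<lambda>Y. L Y - c \<cdot>\<^sub>m Y) ^^ (n * n)) Y = 0\<^sub>m n n"
    unfolding m funpow_Suc_right comp_def using lin_map_funpow_zero[OF lin_map_shift[OF L]] by simp
  thus ?thesis unfolding gen_eigenspace_def using Y by simp
qed

section \<open>Polynomials in a linear map\<close>

text \<open>\<open>lin_poly n L p\<close> is the linear map \<open>p(L)\<close>, evaluated by Horner's scheme.\<close>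

definition lin_poly :: "nat \<Rightarrow> (complex mat \<Rightarrow> complex mat) \<Rightarrow> complex poly \<Rightarrow> complex mat \<Rightarrow> complex mat" where
  "lin_poly n L p X = foldr (\<lambda>a Y. a \<cdot>\<^sub>m X + L Y) (coeffs p) (0\<^sub>m n n)"

context
  fixes n L assumes L: "lin_map n L"
begin

lemma lin_poly_carrier[simp]: "X \<in> carrier_mat n n \<Longrightarrow> lin_poly n L p X \<in> carrier_mat n n"
proof -
  assume X: "X \<in> carrier_mat n n"
  have "foldr (\<lambda>a Y. a \<cdot>\<^sub>m X + L Y) cs (0\<^sub>m n n) \<in> carrier_mat n n" for cs
    by (induction cs) (auto simp: lin_mapD(1)[OF L])
  thus ?thesis unfolding lin_poly_def .
qed

lemma lin_poly_0[simp]: "lin_poly n L 0 X = 0\<^sub>m n n"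
  unfolding lin_poly_def by simp

lemma lin_poly_pCons: assumes X: "X \<in> carrier_mat n n"
  shows "lin_poly n L (pCons a p) X = a \<cdot>\<^sub>m X + L (lin_poly n L p X)"
proof (cases "a = 0 \<and> p = 0")
  case True
  thus ?thesis using X lin_map_zero[OF L] by (auto intro!: eq_matI)
next
  case False
  hence "coeffs (pCons a p) = a # coeffs p" by (auto simp: cCons_def)
  thus ?thesis unfolding lin_poly_def by simp
qed

lemma lin_poly_add: assumes X: "X \<in> carrier_mat n n"
  shows "lin_poly n L (p + q) X = lin_poly n L p X + lin_poly n L q X"
proof (induction p arbitrary: q rule: pCons_induct)
  case 0 thus ?case using X by (auto intro!: eq_matI)
next
  case (pCons a p)
  obtain b q' where q: "q = pCons b q'" by (cases q) auto
  have "lin_poly n L (pCons a p + q) X = (a + b) \<cdot>\<^sub>m X + L (lin_poly n L p X + lin_poly n L q' X)"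
    unfolding q by (simp add: lin_poly_pCons[OF X] pCons)
  also have "\<dots> = (a + b) \<cdot>\<^sub>m X + (L (lin_poly n L p X) + L (lin_poly n L q' X))"
    using lin_mapD(2)[OF L] X by simp
  also have "\<dots> = lin_poly n L (pCons a p) X + lin_poly n L q X"
    unfolding q lin_poly_pCons[OF X]
    using carrier_matD[OF X] carrier_matD[OF lin_mapD(1)[OF L, OF lin_poly_carrier[OF X]]]
    by (intro eq_matI) (auto simp: algebra_simps)
  finally show ?case .
qed

lemma lin_poly_smult: assumes X: "X \<in> carrier_mat n n"
  shows "lin_poly n L (smult c p) X = c \<cdot>\<^sub>m lin_poly n L p X"
proof (induction p rule: pCons_induct)
  case 0 thus ?case by simp
next
  case (pCons a p)
  have "lin_poly n L (smult c (pCons a p)) X = (c * a) \<cdot>\<^sub>m X + c \<cdot>\<^sub>m L (lin_poly n L p X)"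
    using lin_mapD(3)[OF L] X by (simp add: lin_poly_pCons[OF X] pCons)
  also have "\<dots> = c \<cdot>\<^sub>m lin_poly n L (pCons a p) X"
    unfolding lin_poly_pCons[OF X]
    using carrier_matD[OF X] carrier_matD[OF lin_mapD(1)[OF L, OF lin_poly_carrier[OF X]]]
    by (intro eq_matI) (auto simp: algebra_simps)
  finally show ?case .
qed

lemma lin_poly_lin_add: assumes X: "X \<in> carrier_mat n n" and Y: "Y \<in> carrier_mat n n"
  shows "lin_poly n L p (X + Y) = lin_poly n L p X + lin_poly n L p Y"
proof (induction p rule: pCons_induct)
  case 0 thus ?case by (auto intro!: eq_matI)
next
  case (pCons a p)
  have XY: "X + Y \<in> carrier_mat n n" using X Y by simp
  have "lin_poly n L (pCons a p) (X + Y) = a \<cdot>\<^sub>m (X + Y) + (L (lin_poly n L p X) + L (lin_poly n L p Y))"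
    unfolding lin_poly_pCons[OF XY] pCons using lin_mapD(2)[OF L] X Y by simp
  also have "\<dots> = lin_poly n L (pCons a p) X + lin_poly n L (pCons a p) Y"
    unfolding lin_poly_pCons[OF X] lin_poly_pCons[OF Y]
    using carrier_matD[OF X] carrier_matD[OF Y] carrier_matD[OF lin_mapD(1)[OF L, OF lin_poly_carrier[OF X]]]
      carrier_matD[OF lin_mapD(1)[OF L, OF lin_poly_carrier[OF Y]]]
    by (intro eq_matI) (auto simp: algebra_simps)
  finally show ?case .
qed

lemma lin_poly_lin_smult: assumes X: "X \<in> carrier_mat n n"
  shows "lin_poly n L p (c \<cdot>\<^sub>m X) = c \<cdot>\<^sub>m lin_poly n L p X"
proof (induction p rule: pCons_induct)
  case 0 thus ?case by (auto intro!: eq_matI)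
next
  case (pCons a p)
  have cX: "c \<cdot>\<^sub>m X \<in> carrier_mat n n" using X by simp
  have "lin_poly n L (pCons a p) (c \<cdot>\<^sub>m X) = a \<cdot>\<^sub>m (c \<cdot>\<^sub>m X) + c \<cdot>\<^sub>m L (lin_poly n L p X)"
    unfolding lin_poly_pCons[OF cX] pCons using lin_mapD(3)[OF L] X by simp
  also have "\<dots> = c \<cdot>\<^sub>m lin_poly n L (pCons a p) X"
    unfolding lin_poly_pCons[OF X]
    using carrier_matD[OF X] carrier_matD[OF lin_mapD(1)[OF L, OF lin_poly_carrier[OF X]]]
    by (intro eq_matI) (auto simp: algebra_simps)
  finally show ?case .
qed

lemma lin_map_lin_poly: "lin_map n (lin_poly n L p)"
  unfolding lin_map_def using lin_poly_lin_add lin_poly_lin_smult by auto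

lemma lin_poly_zero_arg: "lin_poly n L p (0\<^sub>m n n) = 0\<^sub>m n n"
  by (rule lin_map_zero[OF lin_map_lin_poly])

lemma lin_poly_mult: assumes X: "X \<in> carrier_mat n n"
  shows "lin_poly n L (p * q) X = lin_poly n L p (lin_poly n L q X)"
proof (induction p rule: pCons_induct)
  case 0 thus ?case by simp
next
  case (pCons a p)
  have qX: "lin_poly n L q X \<in> carrier_mat n n" using X by simp
  have "lin_poly n L (pCons a p * q) X = lin_poly n L (smult a q) X + lin_poly n L (pCons 0 (p * q)) X"
    by (simp add: lin_poly_add[OF X])
  also have "\<dots> = a \<cdot>\<^sub>m lin_poly n L q X + (0 \<cdot>\<^sub>m X + L (lin_poly n L p (lin_poly n L q X)))"
    unfolding lin_poly_smult[OF X] lin_poly_pCons[OF X] pCons ..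
  also have "\<dots> = lin_poly n L (pCons a p) (lin_poly n L q X)"
    unfolding lin_poly_pCons[OF qX]
    using carrier_matD[OF X] carrier_matD[OF qX] carrier_matD[OF lin_mapD(1)[OF L, OF lin_poly_carrier[OF qX]]]
    by (intro eq_matI) auto
  finally show ?case .
qed

lemma lin_poly_1: assumes X: "X \<in> carrier_mat n n" shows "lin_poly n L 1 X = X"
  using X lin_map_zero[OF L] by (auto simp: one_pCons lin_poly_pCons intro!: eq_matI)

lemma lin_poly_linear_factor: assumes X: "X \<in> carrier_mat n n"
  shows "lin_poly n L [:-c, 1:] X = L X - c \<cdot>\<^sub>m X"
proof -
  have one: "1 \<cdot>\<^sub>m X = X" using X by (intro eq_matI) auto
  have "lin_poly n L [:-c, 1:] X = (-c) \<cdot>\<^sub>m X + L (1 \<cdot>\<^sub>m X + L (0\<^sub>m n n))"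
    using X by (simp add: lin_poly_pCons)
  also have "\<dots> = (-c) \<cdot>\<^sub>m X + L X" using X lin_map_zero[OF L] one by simp
  also have "\<dots> = L X - c \<cdot>\<^sub>m X"
    using X lin_map_zero[OF L] lin_mapD(1)[OF L X] by (auto intro!: eq_matI)
  finally show ?thesis .
qed

lemma lin_poly_linear_factor_power: assumes X: "X \<in> carrier_mat n n"
  shows "lin_poly n L ([:-c, 1:] ^ k) X = ((\<lambda>Y. L Y - c \<cdot>\<^sub>m Y) ^^ k) X"
proof (induction k)
  case 0 thus ?case using lin_poly_1[OF X] by simp
next
  case (Suc k)
  have "lin_poly n L ([:-c, 1:] ^ Suc k) X = lin_poly n L [:-c, 1:] (lin_poly n L ([:-c, 1:] ^ k) X)"
    unfolding power_Suc lin_poly_mult[OF X] ..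
  also have "\<dots> = L (lin_poly n L ([:-c, 1:] ^ k) X) - c \<cdot>\<^sub>m lin_poly n L ([:-c, 1:] ^ k) X"
    by (rule lin_poly_linear_factor) (use X in simp)
  finally show ?case using Suc by simp
qed

lemma gen_eigenspace_lin_poly:
  "gen_eigenspace n L c = {X \<in> carrier_mat n n. lin_poly n L ([:-c, 1:] ^ (n * n)) X = 0\<^sub>m n n}"
  unfolding gen_eigenspace_def using lin_poly_linear_factor_power by auto

lemma lin_poly_coprime_kernels: assumes "coprime p q" and X: "X \<in> carrier_mat n n"
  and "lin_poly n L p X = 0\<^sub>m n n" and "lin_poly n L q X = 0\<^sub>m n n"
  shows "X = 0\<^sub>m n n"
proof -
  obtain a b where "a * p + b * q = 1"
    using bezout_coefficients_fst_snd[of p q] assms(1) by (auto simp: coprime_iff_gcd_eq_1)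
  hence "X = lin_poly n L (a * p + b * q) X" using lin_poly_1[OF X] by simp
  also have "\<dots> = 0\<^sub>m n n" using assms by (simp add: lin_poly_add lin_poly_mult lin_poly_zero_arg)
  finally show ?thesis .
qed

lemma lin_poly_coprime_split: assumes "coprime p q" and X: "X \<in> carrier_mat n n"
  and pq: "lin_poly n L (p * q) X = 0\<^sub>m n n"
  obtains X1 X2 where "X1 \<in> carrier_mat n n" "X2 \<in> carrier_mat n n" "X = X1 + X2"
    "lin_poly n L p X1 = 0\<^sub>m n n" "lin_poly n L q X2 = 0\<^sub>m n n"
proof -
  obtain a b where ab: "a * p + b * q = 1"
    using bezout_coefficients_fst_snd[of p q] assms(1) by (auto simp: coprime_iff_gcd_eq_1)
  \<comment> \<open>the Bezout identity splits \<open>X\<close> into \<open>(b q)(L) X\<close> and \<open>(a p)(L) X\<close>\<close>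
  have "X = lin_poly n L (a * p + b * q) X" using lin_poly_1[OF X] ab by simp
  also have "\<dots> = lin_poly n L (b * q) X + lin_poly n L (a * p) X" using X
    by (simp add: lin_poly_add) (rule comm_add_mat[of _ n n], auto)
  finally have "X = lin_poly n L (b * q) X + lin_poly n L (a * p) X" .
  moreover have "lin_poly n L p (lin_poly n L (b * q) X) = lin_poly n L (b * (p * q)) X"
    "lin_poly n L q (lin_poly n L (a * p) X) = lin_poly n L (a * (p * q)) X"
    using X by (simp_all add: lin_poly_mult[symmetric] ac_simps)
  hence "lin_poly n L p (lin_poly n L (b * q) X) = 0\<^sub>m n n"
    "lin_poly n L q (lin_poly n L (a * p) X) = 0\<^sub>m n n"
    using X pq by (simp_all add: lin_poly_mult lin_poly_zero_arg)
  ultimately show ?thesis using X by (intro that) auto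
qed

end

lemma coprime_linear_factors: fixes a b :: complex assumes "a \<noteq> b"
  shows "coprime [:-a, 1:] [:-b, 1:]"
proof (rule coprimeI)
  fix c assume "c dvd [:-a, 1:]" "c dvd [:-b, 1:]"
  hence "c dvd smult (1 / (b - a)) ([:-a, 1:] - [:-b, 1:])" by (intro dvd_smult dvd_diff)
  moreover have "smult (1 / (b - a)) ([:-a, 1:] - [:-b, 1:]) = 1"
    using assms by (simp add: one_pCons)
  ultimately show "is_unit c" by simp
qed

lemma coprime_linear_factor_power_prod: fixes a :: complex assumes "a \<notin> C"
  shows "coprime ([:-a, 1:] ^ k) (\<Prod>c\<in>C. [:-c, 1:] ^ m)"
  by (rule prod_coprime_right) (metis assms coprime_linear_factors coprime_power_left_iff
      coprime_power_right_iff)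

lemma coprime_linear_factor_prods: fixes C D :: "complex set" assumes "C \<inter> D = {}"
  shows "coprime (\<Prod>c\<in>C. [:-c, 1:] ^ k) (\<Prod>c\<in>D. [:-c, 1:] ^ m)"
  by (rule prod_coprime_left) (metis assms coprime_linear_factor_power_prod disjoint_iff)

section \<open>An annihilating polynomial\<close>

text \<open>A linear map on \<open>n \<times> n\<close> matrices is represented by an \<open>n\<^sup>2 \<times> n\<^sup>2\<close> matrix acting on
  row-major vectorizations; its characteristic polynomial splits over \<open>\<complex>\<close>, and the Schur
  decomposition yields Cayley--Hamilton for it.\<close>

lemma sum_lessThan_mult:
  "(\<Sum>s<m * n. f s) = (\<Sum>i<m. \<Sum>j<n. f (i * n + j))" for f :: "nat \<Rightarrow> 'a :: comm_monoid_add"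
proof (induction m)
  case (Suc m)
  have "(\<Sum>s<Suc m * n. f s) = (\<Sum>s<m * n + n. f s)" by (simp add: add.commute)
  also have "\<dots> = (\<Sum>s<m * n. f s) + (\<Sum>j<n. f (j + m * n))" by (rule sum_lessThan_add)
  finally show ?case using Suc by (simp add: add.commute)
qed simp

lemma index_mult_add_less: fixes i j m n :: nat assumes "i < m" "j < n" shows "i * n + j < m * n"
proof -
  have "i * n + j < Suc i * n" using assms by simp
  also have "\<dots> \<le> m * n" using assms(1) by (intro mult_le_mono1) simp
  finally show ?thesis .
qed

lemma index_div_mod_less: fixes p m n :: nat assumes "p < m * n" shows "p div n < m" "p mod n < n"
proof -
  have "n > 0" using assms by (cases n) auto
  thus "p mod n < n" by simp
  show "p div n < m" using assms by (simp add: less_mult_imp_div_less)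
qed

definition vec_of_mat :: "nat \<Rightarrow> complex mat \<Rightarrow> complex vec" where
  "vec_of_mat n X = vec (n * n) (\<lambda>s. X $$ (s div n, s mod n))"

lemma vec_of_mat_carrier[simp]: "vec_of_mat n X \<in> carrier_vec (n * n)"
  unfolding vec_of_mat_def by simp

lemma vec_of_mat_eq_0: assumes X: "X \<in> carrier_mat n n" and v: "vec_of_mat n X = 0\<^sub>v (n * n)"
  shows "X = 0\<^sub>m n n"
proof (rule eq_matI)
  fix i j assume "i < dim_row (0\<^sub>m n n :: complex mat)" "j < dim_col (0\<^sub>m n n :: complex mat)"
  hence ij: "i < n" "j < n" by auto
  have "vec_of_mat n X $ (i * n + j) = 0" using v index_mult_add_less[OF ij] by simp
  thus "X $$ (i, j) = 0\<^sub>m n n $$ (i, j)" using ij index_mult_add_less[OF ij] unfolding vec_of_mat_def by simp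
qed (use X in auto)

definition mat_of_lin :: "nat \<Rightarrow> (complex mat \<Rightarrow> complex mat) \<Rightarrow> complex mat" where
  "mat_of_lin n L = mat (n * n) (n * n) (\<lambda>(r, s). L (mat_unit n (s div n) (s mod n)) $$ (r div n, r mod n))"

lemma mat_of_lin_carrier: "mat_of_lin n L \<in> carrier_mat (n * n) (n * n)"
  unfolding mat_of_lin_def by simp

lemma vec_of_mat_lin_map: assumes L: "lin_map n L" and X: "X \<in> carrier_mat n n"
  shows "vec_of_mat n (L X) = mat_of_lin n L *\<^sub>v vec_of_mat n X"
proof (rule eq_vecI)
  fix r assume "r < dim_vec (mat_of_lin n L *\<^sub>v vec_of_mat n X)"
  hence r: "r < n * n" unfolding mat_of_lin_def by simp
  note rr = index_div_mod_less[OF r]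
  have "(mat_of_lin n L *\<^sub>v vec_of_mat n X) $ r
      = (\<Sum>s<n * n. L (mat_unit n (s div n) (s mod n)) $$ (r div n, r mod n) * X $$ (s div n, s mod n))"
    using r unfolding mat_of_lin_def vec_of_mat_def by (simp add: scalar_prod_def atLeast0LessThan)
  also have "\<dots> = (\<Sum>i<n. \<Sum>j<n. L (mat_unit n i j) $$ (r div n, r mod n) * X $$ (i, j))"
    unfolding sum_lessThan_mult by (intro sum.cong refl) auto
  also have "\<dots> = L X $$ (r div n, r mod n)"
    by (subst lin_map_index[OF L X rr]) (simp add: mult.commute)
  finally show "vec_of_mat n (L X) $ r = (mat_of_lin n L *\<^sub>v vec_of_mat n X) $ r"
    using r unfolding vec_of_mat_def by simp
qed (simp add: mat_of_lin_def)

definition vec_shift :: "complex mat \<Rightarrow> complex \<Rightarrow> complex vec \<Rightarrow> complex vec" where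
  "vec_shift M e w = M *\<^sub>v w - e \<cdot>\<^sub>v w"

lemma vec_shift_carrier: "M \<in> carrier_mat N N \<Longrightarrow> w \<in> carrier_vec N \<Longrightarrow> vec_shift M e w \<in> carrier_vec N"
  unfolding vec_shift_def by auto

lemma foldr_vec_shift_carrier:
  "M \<in> carrier_mat N N \<Longrightarrow> w \<in> carrier_vec N \<Longrightarrow> foldr (vec_shift M) es w \<in> carrier_vec N"
  by (induction es) (auto intro: vec_shift_carrier)

text \<open>Cayley--Hamilton for an upper triangular \<open>B\<close>: applying \<open>B - B\<^sub>k\<^sub>k\<close> for \<open>k = 0, \<dots>, N - 1\<close>
  successively clears the last coordinates of a vector, one at a time.\<close>

lemma upper_triangular_foldr_vec_shift: assumes B: "B \<in> carrier_mat N N" and ut: "upper_triangular B"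
  shows "k \<le> N \<Longrightarrow> v \<in> carrier_vec N \<Longrightarrow> (\<forall>j. k \<le> j \<longrightarrow> j < N \<longrightarrow> v $ j = 0) \<Longrightarrow>
     foldr (vec_shift B) (map (\<lambda>i. B $$ (i, i)) [0..<k]) v = 0\<^sub>v N"
proof (induction k arbitrary: v)
  case 0
  thus ?case by (intro eq_vecI) auto
next
  case (Suc k)
  define w where "w = vec_shift B (B $$ (k, k)) v"
  have wC: "w \<in> carrier_vec N" unfolding w_def using vec_shift_carrier[OF B Suc(3)] .
  have wz: "w $ j = 0" if j: "k \<le> j" "j < N" for j
  proof -
    have "(\<Sum>l = 0..<N. B $$ (j, l) * v $ l) = (\<Sum>l = 0..<N. if l = j then B $$ (j, j) * v $ j else 0)"
    proof (rule sum.cong[OF refl])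
      fix l assume l: "l \<in> {0..<N}"
      have "B $$ (j, l) = 0" if "l < j" using that ut j B unfolding upper_triangular_def by auto
      moreover have "v $ l = 0" if "j < l" using that Suc(4) l j by auto
      ultimately show "B $$ (j, l) * v $ l = (if l = j then B $$ (j, j) * v $ j else 0)"
        by (cases "l < j"; cases "j < l") auto
    qed
    hence "w $ j = B $$ (j, j) * v $ j - B $$ (k, k) * v $ j"
      unfolding w_def vec_shift_def using j B Suc(3) by (simp add: scalar_prod_def)
    moreover have "v $ j = 0" if "j \<noteq> k" using that Suc(4) j by auto
    ultimately show ?thesis by (cases "j = k") auto
  qed
  have "foldr (vec_shift B) (map (\<lambda>i. B $$ (i, i)) [0..<Suc k]) v
      = foldr (vec_shift B) (map (\<lambda>i. B $$ (i, i)) [0..<k]) w"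
    unfolding w_def by simp
  also have "\<dots> = 0\<^sub>v N" by (rule Suc(1)) (use Suc(2) wC wz in auto)
  finally show ?case .
qed

lemma foldr_vec_shift_similar: assumes A: "A \<in> carrier_mat N N" and B: "B \<in> carrier_mat N N"
  and P: "P \<in> carrier_mat N N" and AP: "A * P = P * B" and w: "w \<in> carrier_vec N"
  shows "foldr (vec_shift A) es (P *\<^sub>v w) = P *\<^sub>v foldr (vec_shift B) es w"
proof (induction es)
  case (Cons e es)
  define f where "f = foldr (vec_shift B) es w"
  have fC: "f \<in> carrier_vec N" unfolding f_def by (rule foldr_vec_shift_carrier[OF B w])
  have "foldr (vec_shift A) (e # es) (P *\<^sub>v w) = (A * P) *\<^sub>v f - e \<cdot>\<^sub>v (P *\<^sub>v f)"
    using Cons assoc_mult_mat_vec[OF A P fC] unfolding f_def vec_shift_def by simp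
  also have "\<dots> = P *\<^sub>v (B *\<^sub>v f) - P *\<^sub>v (e \<cdot>\<^sub>v f)"
    unfolding AP using assoc_mult_mat_vec[OF P B fC] mult_mat_vec[OF P fC] by simp
  also have "\<dots> = P *\<^sub>v vec_shift B e f"
    unfolding vec_shift_def using P B fC by (subst mult_minus_distrib_mat_vec) auto
  finally show ?case unfolding f_def by simp
qed simp

lemma cayley_hamilton_foldr_vec_shift: assumes A: "A \<in> carrier_mat N N"
  obtains es where "length es = N" "\<And>v. v \<in> carrier_vec N \<Longrightarrow> foldr (vec_shift A) es v = 0\<^sub>v N"
proof -
  obtain es where es: "char_poly A = (\<Prod>a\<leftarrow>es. [:- a, 1:])" using char_poly_factorized[OF A] by blast
  obtain B P Q where "schur_decomposition A es = (B, P, Q)" by (cases "schur_decomposition A es") auto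
  from schur_decomposition[OF A es this] have sim: "similar_mat_wit A B P Q" and ut: "upper_triangular B"
    and dg: "diag_mat B = es" by auto
  from sim A have BC: "B \<in> carrier_mat N N" and PC: "P \<in> carrier_mat N N" and QC: "Q \<in> carrier_mat N N"
    and PQ: "P * Q = 1\<^sub>m N" and QP: "Q * P = 1\<^sub>m N" and APBQ: "A = P * B * Q"
    unfolding similar_mat_wit_def Let_def by auto
  have "A * P = P * B * (Q * P)" unfolding APBQ using PC BC QC by (simp add: assoc_mult_mat[of _ N N _ N _ N])
  hence AP: "A * P = P * B" unfolding QP using PC BC by simp
  have esB: "es = map (\<lambda>i. B $$ (i, i)) [0..<N]" using dg BC unfolding diag_mat_def by auto
  show ?thesis
  proof (rule that)
    show "length es = N" using esB by simp
    fix v :: "complex vec" assume v: "v \<in> carrier_vec N"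
    have Qv: "Q *\<^sub>v v \<in> carrier_vec N" using QC v by simp
    have "v = P *\<^sub>v (Q *\<^sub>v v)" using assoc_mult_mat_vec[OF PC QC v] PQ v by simp
    hence "foldr (vec_shift A) es v = P *\<^sub>v foldr (vec_shift B) es (Q *\<^sub>v v)"
      using foldr_vec_shift_similar[OF A BC PC AP Qv] by simp
    also have "foldr (vec_shift B) es (Q *\<^sub>v v) = 0\<^sub>v N"
      unfolding esB by (rule upper_triangular_foldr_vec_shift[OF BC ut]) (use Qv in auto)
    also have "P *\<^sub>v 0\<^sub>v N = 0\<^sub>v N" using PC by (intro eq_vecI) (auto simp: scalar_prod_def)
    finally show "foldr (vec_shift A) es v = 0\<^sub>v N" .
  qed
qed

lemma prod_list_map_eq_prod_count:
  "prod_list (map f es) = (\<Prod>c\<in>set es. f c ^ count_list es c)" for f :: "'a \<Rightarrow> 'b :: comm_monoid_mult"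
proof (induction es)
  case (Cons e es)
  show ?case
  proof (cases "e \<in> set es")
    case True
    have "(\<Prod>c\<in>set (e # es). f c ^ count_list (e # es) c)
        = (\<Prod>c\<in>set es. (if c = e then f c else 1) * f c ^ count_list es c)"
      using True by (intro prod.cong) auto
    also have "\<dots> = f e * (\<Prod>c\<in>set es. f c ^ count_list es c)"
      using True by (simp add: prod.distrib prod.delta')
    finally show ?thesis using Cons by simp
  next
    case False
    have "(\<Prod>c\<in>set es. f c ^ count_list (e # es) c) = (\<Prod>c\<in>set es. f c ^ count_list es c)"
      using False by (intro prod.cong) auto
    thus ?thesis using Cons False by simp
  qed
qed simp

lemma vec_of_mat_lin_poly_prod_list: assumes L: "lin_map n L" and X: "X \<in> carrier_mat n n"
  shows "vec_of_mat n (lin_poly n L (\<Prod>e\<leftarrow>es. [:-e, 1:]) X) = foldr (vec_shift (mat_of_lin n L)) es (vec_of_mat n X)"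
proof (induction es)
  case Nil thus ?case using lin_poly_1[OF L X] by simp
next
  case (Cons e es)
  define Y where "Y = lin_poly n L (\<Prod>e\<leftarrow>es. [:-e, 1:]) X"
  have YC: "Y \<in> carrier_mat n n" unfolding Y_def using lin_poly_carrier[OF L X] .
  have prod: "(\<Prod>e\<leftarrow>e # es. [:-e, 1:]) = [:-e, 1:] * (\<Prod>e\<leftarrow>es. [:-e, 1:])" by simp
  have "lin_poly n L (\<Prod>e\<leftarrow>e # es. [:-e, 1:]) X = L Y - e \<cdot>\<^sub>m Y"
    unfolding prod Y_def lin_poly_mult[OF L X] by (rule lin_poly_linear_factor[OF L lin_poly_carrier[OF L X]])
  moreover have "vec_of_mat n (L Y - e \<cdot>\<^sub>m Y) = vec_of_mat n (L Y) - e \<cdot>\<^sub>v vec_of_mat n Y"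
    using YC lin_mapD(1)[OF L YC] index_div_mod_less
    by (intro eq_vecI) (auto simp: vec_of_mat_def)
  ultimately show ?case using Cons vec_of_mat_lin_map[OF L YC] unfolding Y_def vec_shift_def by simp
qed

lemma lin_map_annihilating_poly: assumes L: "lin_map n L"
  obtains C where "finite C" "\<And>X. X \<in> carrier_mat n n \<Longrightarrow> lin_poly n L (\<Prod>c\<in>C. [:-c, 1:] ^ (n * n)) X = 0\<^sub>m n n"
proof -
  obtain es where es: "length es = n * n"
    "\<And>v. v \<in> carrier_vec (n * n) \<Longrightarrow> foldr (vec_shift (mat_of_lin n L)) es v = 0\<^sub>v (n * n)"
    using cayley_hamilton_foldr_vec_shift[OF mat_of_lin_carrier] by blast
  let ?f = "\<lambda>c. [:-c, 1:] :: complex poly"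
  show ?thesis
  proof (rule that[of "set es"])
    fix X :: "complex mat" assume X: "X \<in> carrier_mat n n"
    have "vec_of_mat n (lin_poly n L (\<Prod>e\<leftarrow>es. ?f e) X) = 0\<^sub>v (n * n)"
      using vec_of_mat_lin_poly_prod_list[OF L X] es(2) by simp
    hence kill: "lin_poly n L (\<Prod>c\<in>set es. ?f c ^ count_list es c) X = 0\<^sub>m n n"
      using vec_of_mat_eq_0[OF lin_poly_carrier[OF L X]] prod_list_map_eq_prod_count[of ?f es] by simp
    \<comment> \<open>every multiplicity is at most \<open>length es = n * n\<close>\<close>
    have "(\<Prod>c\<in>set es. ?f c ^ (n * n))
        = (\<Prod>c\<in>set es. ?f c ^ (n * n - count_list es c)) * (\<Prod>c\<in>set es. ?f c ^ count_list es c)"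
      unfolding prod.distrib[symmetric] power_add[symmetric]
      by (intro prod.cong refl) (metis count_le_length es(1) le_add_diff_inverse2)
    thus "lin_poly n L (\<Prod>c\<in>set es. ?f c ^ (n * n)) X = 0\<^sub>m n n"
      using kill X by (simp add: lin_poly_mult[OF L] lin_poly_zero_arg[OF L])
  qed simp
qed

section \<open>Primary decomposition and the peripheral projection\<close>

abbreviation peripheral_span :: "nat \<Rightarrow> (complex mat \<Rightarrow> complex mat) \<Rightarrow> complex mat set" where
  "peripheral_span n L \<equiv> mat_span n (\<Union>c\<in>{c. cmod c = 1}. gen_eigenspace n L c)"

abbreviation nonperipheral_span :: "nat \<Rightarrow> (complex mat \<Rightarrow> complex mat) \<Rightarrow> complex mat set" where
  "nonperipheral_span n L \<equiv> mat_span n (\<Union>c\<in>{c. cmod c \<noteq> 1}. gen_eigenspace n L c)"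

abbreviation peripheral_projection_spec ::
    "nat \<Rightarrow> (complex mat \<Rightarrow> complex mat) \<Rightarrow> (complex mat \<Rightarrow> complex mat) \<Rightarrow> bool" where
  "peripheral_projection_spec n L P \<equiv> lin_map n P \<and> (\<forall>X. X \<notin> carrier_mat n n \<longrightarrow> P X = 0\<^sub>m n n) \<and>
     (\<forall>X \<in> carrier_mat n n. P (P X) = P X) \<and> P ` carrier_mat n n = peripheral_span n L \<and>
     {X \<in> carrier_mat n n. P X = 0\<^sub>m n n} = nonperipheral_span n L"

definition peripheral_projector :: "nat \<Rightarrow> (complex mat \<Rightarrow> complex mat) \<Rightarrow> (complex mat \<Rightarrow> complex mat) \<Rightarrow> bool" where
  "peripheral_projector n L Q \<longleftrightarrow> lin_map n Q \<and>
     (\<forall>c. \<forall>Z \<in> gen_eigenspace n L c. Q Z = (if cmod c = 1 then Z else 0\<^sub>m n n))"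

context
  fixes n L assumes L: "lin_map n L"
begin

lemma lin_poly_prod_gen_eigenspace: assumes "finite D" "c \<in> D" and Z: "Z \<in> gen_eigenspace n L c"
  shows "lin_poly n L (\<Prod>d\<in>D. [:-d, 1:] ^ (n * n)) Z = 0\<^sub>m n n"
proof -
  have "(\<Prod>d\<in>D. [:-d, 1:] ^ (n * n)) = (\<Prod>d\<in>D - {c}. [:-d, 1:] ^ (n * n)) * [:-c, 1:] ^ (n * n)"
    using assms(1,2) by (subst prod.remove[of _ c]) (auto simp: mult.commute)
  thus ?thesis using Z gen_eigenspace_carrier[OF Z]
    by (simp add: lin_poly_mult[OF L] gen_eigenspace_lin_poly[OF L] lin_poly_zero_arg[OF L])
qed

lemma lin_poly_prod_kernel_decomposition: assumes "finite C"
  shows "X \<in> carrier_mat n n \<Longrightarrow> lin_poly n L (\<Prod>c\<in>C. [:-c, 1:] ^ (n * n)) X = 0\<^sub>m n n \<Longrightarrow>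
    \<exists>f. (\<forall>c\<in>C. f c \<in> gen_eigenspace n L c) \<and> X = mat_sum n f C"
  using assms
proof (induction C arbitrary: X rule: finite_induct)
  case empty
  thus ?case using lin_poly_1[OF L] by simp
next
  case (insert c F X)
  have "coprime ([:-c, 1:] ^ (n * n)) (\<Prod>d\<in>F. [:-d, 1:] ^ (n * n))"
    by (rule coprime_linear_factor_power_prod) (use insert in auto)
  moreover have "lin_poly n L ([:-c, 1:] ^ (n * n) * (\<Prod>d\<in>F. [:-d, 1:] ^ (n * n))) X = 0\<^sub>m n n"
    using insert by (simp add: prod.insert)
  ultimately obtain X1 X2 where X12: "X1 \<in> carrier_mat n n" "X2 \<in> carrier_mat n n" "X = X1 + X2"
    "lin_poly n L ([:-c, 1:] ^ (n * n)) X1 = 0\<^sub>m n n" "lin_poly n L (\<Prod>d\<in>F. [:-d, 1:] ^ (n * n)) X2 = 0\<^sub>m n n"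
    using lin_poly_coprime_split[OF L _ insert(4)] by metis
  from insert(3)[OF X12(2) X12(5)] obtain f where f: "\<forall>d\<in>F. f d \<in> gen_eigenspace n L d"
    "X2 = mat_sum n f F" by blast
  have "mat_sum n (f(c := X1)) F = mat_sum n f F" by (rule mat_sum_cong) (use insert in auto)
  hence "X = mat_sum n (f(c := X1)) (insert c F)"
    using insert X12 f by (simp add: mat_sum_insert)
  moreover have "\<forall>d\<in>insert c F. (f(c := X1)) d \<in> gen_eigenspace n L d"
    using f X12 insert by (auto simp: gen_eigenspace_lin_poly[OF L])
  ultimately show ?case by blast
qed

lemma gen_eigenspace_decomposition: assumes X: "X \<in> carrier_mat n n"
  shows "\<exists>C f. finite C \<and> (\<forall>c\<in>C. f c \<in> gen_eigenspace n L c) \<and> X = mat_sum n f C"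
proof -
  obtain C where "finite C" "lin_poly n L (\<Prod>c\<in>C. [:-c, 1:] ^ (n * n)) X = 0\<^sub>m n n"
    using lin_map_annihilating_poly[OF L] X by blast
  thus ?thesis using lin_poly_prod_kernel_decomposition[OF _ X] by blast
qed

lemma carrier_subset_span_gen_eigenspaces: "carrier_mat n n \<subseteq> mat_span n (\<Union>c. gen_eigenspace n L c)"
proof
  fix X :: "complex mat" assume "X \<in> carrier_mat n n"
  then obtain C f where C: "finite C" "\<forall>c\<in>C. f c \<in> gen_eigenspace n L c" "X = mat_sum n f C"
    using gen_eigenspace_decomposition by blast
  have "f c \<in> carrier_mat n n" if "c \<in> C" for c using C(2) that gen_eigenspace_carrier by blast
  thus "X \<in> mat_span n (\<Union>c. gen_eigenspace n L c)"
    using C by (auto intro!: mat_subspace_mat_sum[OF mat_subspace_span]) (auto intro!: mat_span_base)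
qed

lemma peripheral_decomposition: assumes "X \<in> carrier_mat n n"
  obtains R K where "R \<in> peripheral_span n L" "K \<in> nonperipheral_span n L" "X = R + K"
proof -
  obtain C f where C: "finite C" "\<forall>c\<in>C. f c \<in> gen_eigenspace n L c" "X = mat_sum n f C"
    using gen_eigenspace_decomposition[OF assms] by blast
  let ?U = "{c. cmod c = 1}"
  have fC: "f c \<in> carrier_mat n n" if "c \<in> C" for c using C(2) that gen_eigenspace_carrier by blast
  have "mat_sum n f (C \<inter> ?U) \<in> peripheral_span n L" "mat_sum n f (C - ?U) \<in> nonperipheral_span n L"
    using C fC by (auto intro!: mat_subspace_mat_sum[OF mat_subspace_span]) (auto intro!: mat_span_base)
  thus ?thesis using that C(3) mat_sum_Int_Diff[OF C(1), of n f ?U] by simp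
qed

lemma gen_eigenspace_trivial_outside_roots:
  assumes C: "\<And>X. X \<in> carrier_mat n n \<Longrightarrow> lin_poly n L (\<Prod>d\<in>C. [:-d, 1:] ^ (n * n)) X = 0\<^sub>m n n"
    and "c \<notin> C" and Z: "Z \<in> gen_eigenspace n L c"
  shows "Z = 0\<^sub>m n n"
  using lin_poly_coprime_kernels[OF L coprime_linear_factor_power_prod[OF \<open>c \<notin> C\<close>]]
    Z C gen_eigenspace_carrier[OF Z] by (auto simp: gen_eigenspace_lin_poly[OF L])

lemma peripheral_projector_exists: "\<exists>Q. peripheral_projector n L Q"
proof -
  obtain C where C: "finite C" "\<And>X. X \<in> carrier_mat n n \<Longrightarrow> lin_poly n L (\<Prod>c\<in>C. [:-c, 1:] ^ (n * n)) X = 0\<^sub>m n n"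
    using lin_map_annihilating_poly[OF L] by blast
  let ?C1 = "{c\<in>C. cmod c = 1}" and ?C2 = "{c\<in>C. cmod c \<noteq> 1}"
  define p1 where "p1 = (\<Prod>c\<in>?C1. [:-c, 1:] ^ (n * n))"
  define p2 where "p2 = (\<Prod>c\<in>?C2. [:-c, 1:] ^ (n * n))"
  have "coprime p1 p2" unfolding p1_def p2_def by (rule coprime_linear_factor_prods) auto
  then obtain a b where ab: "a * p1 + b * p2 = 1"
    using bezout_coefficients_fst_snd[of p1 p2] by (auto simp: coprime_iff_gcd_eq_1)
  \<comment> \<open>\<open>(b p\<^sub>2)(L)\<close> is the identity on the peripheral generalized eigenspaces (where \<open>p\<^sub>1(L)\<close>
    vanishes) and zero on the others (where \<open>p\<^sub>2(L)\<close> vanishes)\<close>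
  define Q where "Q = lin_poly n L (b * p2)"
  have "Q Z = (if cmod c = 1 then Z else 0\<^sub>m n n)" if Z: "Z \<in> gen_eigenspace n L c" for c Z
  proof (cases "c \<in> C")
    case True
    have ZC: "Z \<in> carrier_mat n n" using Z by (rule gen_eigenspace_carrier)
    show ?thesis
    proof (cases "cmod c = 1")
      case True
      hence "lin_poly n L p1 Z = 0\<^sub>m n n"
        unfolding p1_def using \<open>c \<in> C\<close> C(1) by (intro lin_poly_prod_gen_eigenspace[OF _ _ Z]) auto
      hence "lin_poly n L (a * p1 + b * p2) Z = Q Z"
        unfolding Q_def using ZC
        by (simp add: lin_poly_add[OF L] lin_poly_mult[OF L] lin_poly_zero_arg[OF L] lin_poly_carrier[OF L])
      thus ?thesis using lin_poly_1[OF L ZC] ab True by simp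
    next
      case False
      hence "lin_poly n L p2 Z = 0\<^sub>m n n"
        unfolding p2_def using \<open>c \<in> C\<close> C(1) by (intro lin_poly_prod_gen_eigenspace[OF _ _ Z]) auto
      thus ?thesis unfolding Q_def using ZC False by (simp add: lin_poly_mult[OF L] lin_poly_zero_arg[OF L])
    qed
  next
    case False
    thus ?thesis using gen_eigenspace_trivial_outside_roots[OF C(2) False Z] lin_poly_zero_arg[OF L]
      unfolding Q_def by simp
  qed
  thus ?thesis unfolding peripheral_projector_def Q_def using lin_map_lin_poly[OF L] by blast
qed

context
  fixes Q assumes Q: "peripheral_projector n L Q"
begin

lemma peripheral_projector_lin_map: "lin_map n Q"
  using Q unfolding peripheral_projector_def by simp

lemma peripheral_projector_fixes_span: assumes "R \<in> peripheral_span n L" shows "Q R = R"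
proof -
  have "lin_map n (\<lambda>X. X)" by (simp add: lin_map_def)
  hence "peripheral_span n L \<subseteq> {X \<in> carrier_mat n n. Q X = X}"
    using Q gen_eigenspace_carrier unfolding peripheral_projector_def
    by (intro mat_span_minimal mat_subspace_equalizer) auto
  thus ?thesis using assms by auto
qed

lemma peripheral_projector_kills_span: assumes "K \<in> nonperipheral_span n L" shows "Q K = 0\<^sub>m n n"
proof -
  have "nonperipheral_span n L \<subseteq> {X \<in> carrier_mat n n. Q X \<in> {0\<^sub>m n n}}"
    using Q gen_eigenspace_carrier unfolding peripheral_projector_def
    by (intro mat_span_minimal mat_subspace_preimage mat_subspace_zero) auto
  thus ?thesis using assms by auto
qed

lemma peripheral_projector_decomposition:
  assumes "R \<in> peripheral_span n L" "K \<in> nonperipheral_span n L"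
  shows "Q (R + K) = R"
proof -
  have "R \<in> carrier_mat n n" "K \<in> carrier_mat n n"
    using assms mat_subspaceD(1)[OF mat_subspace_span] by blast+
  thus ?thesis using assms lin_mapD(2)[OF peripheral_projector_lin_map]
    peripheral_projector_fixes_span peripheral_projector_kills_span by simp
qed

lemma peripheral_projector_image: "Q ` carrier_mat n n = peripheral_span n L"
proof
  show "Q ` carrier_mat n n \<subseteq> peripheral_span n L"
  proof safe
    fix X :: "complex mat" assume "X \<in> carrier_mat n n"
    then obtain R K where "R \<in> peripheral_span n L" "K \<in> nonperipheral_span n L" "X = R + K"
      by (rule peripheral_decomposition)
    thus "Q X \<in> peripheral_span n L" using peripheral_projector_decomposition by simp
  qed
  show "peripheral_span n L \<subseteq> Q ` carrier_mat n n"
  proof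
    fix R assume R: "R \<in> peripheral_span n L"
    hence "R \<in> carrier_mat n n" using mat_subspaceD(1)[OF mat_subspace_span] by blast
    thus "R \<in> Q ` carrier_mat n n" using peripheral_projector_fixes_span[OF R] by force
  qed
qed

lemma peripheral_projector_kernel: "{X \<in> carrier_mat n n. Q X = 0\<^sub>m n n} = nonperipheral_span n L"
proof
  show "nonperipheral_span n L \<subseteq> {X \<in> carrier_mat n n. Q X = 0\<^sub>m n n}"
    using peripheral_projector_kills_span mat_subspaceD(1)[OF mat_subspace_span] by blast
  show "{X \<in> carrier_mat n n. Q X = 0\<^sub>m n n} \<subseteq> nonperipheral_span n L"
  proof safe
    fix X assume "X \<in> carrier_mat n n" "Q X = 0\<^sub>m n n"
    moreover obtain R K where RK: "R \<in> peripheral_span n L" "K \<in> nonperipheral_span n L" "X = R + K"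
      using peripheral_decomposition \<open>X \<in> carrier_mat n n\<close> by blast
    ultimately have "R = 0\<^sub>m n n" using peripheral_projector_decomposition by simp
    moreover have "K \<in> carrier_mat n n" using RK(2) mat_subspaceD(1)[OF mat_subspace_span] by blast
    ultimately show "X \<in> nonperipheral_span n L" using RK by simp
  qed
qed

lemma peripheral_projection_spec_restrict:
  "peripheral_projection_spec n L (\<lambda>X. if X \<in> carrier_mat n n then Q X else 0\<^sub>m n n)"
  (is "peripheral_projection_spec n L ?P")
proof (intro conjI allI impI ballI)
  have Ql: "lin_map n Q" by (rule peripheral_projector_lin_map)
  thus "lin_map n ?P" unfolding lin_map_def by auto
  show "?P X = 0\<^sub>m n n" if "X \<notin> carrier_mat n n" for X using that by simp
  show "?P (?P X) = ?P X" if "X \<in> carrier_mat n n" for X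
    using that peripheral_projector_image peripheral_projector_fixes_span lin_mapD(1)[OF Ql] by auto
  show "?P ` carrier_mat n n = peripheral_span n L" using peripheral_projector_image by simp
  have "{X \<in> carrier_mat n n. ?P X = 0\<^sub>m n n} = {X \<in> carrier_mat n n. Q X = 0\<^sub>m n n}" by auto
  thus "{X \<in> carrier_mat n n. ?P X = 0\<^sub>m n n} = nonperipheral_span n L"
    using peripheral_projector_kernel by simp
qed

text \<open>The specification forces the identity on the peripheral span and zero on the nonperipheral
  span, so it determines the map uniquely.\<close>

lemma peripheral_projection_spec_unique: assumes P: "peripheral_projection_spec n L P"
  and Y: "Y \<in> carrier_mat n n"
  shows "P Y = Q Y"
proof -
  obtain R K where RK: "R \<in> peripheral_span n L" "K \<in> nonperipheral_span n L" "Y = R + K"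
    using peripheral_decomposition Y by blast
  have "R \<in> carrier_mat n n" "K \<in> carrier_mat n n"
    using RK mat_subspaceD(1)[OF mat_subspace_span] by blast+
  moreover have "P R = R"
  proof -
    obtain Y' where "Y' \<in> carrier_mat n n" "R = P Y'" using P RK(1) by (metis imageE)
    thus ?thesis using P by simp
  qed
  moreover have "P K = 0\<^sub>m n n" using P RK(2) by blast
  ultimately have "P Y = R" using P RK(3) lin_mapD(2)[of n P] by simp
  thus ?thesis using RK peripheral_projector_decomposition by simp
qed

lemma peripheral_projection_eq: assumes X: "X \<in> carrier_mat n n"
  shows "peripheral_projection n L X = Q X"
proof -
  have "peripheral_projection n L = (\<lambda>X. if X \<in> carrier_mat n n then Q X else 0\<^sub>m n n)"
    unfolding peripheral_projection_def
  proof (rule the_equality[where P = "\<lambda>P. peripheral_projection_spec n L P",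
        OF peripheral_projection_spec_restrict])
    fix P assume P: "peripheral_projection_spec n L P"
    show "P = (\<lambda>X. if X \<in> carrier_mat n n then Q X else 0\<^sub>m n n)"
    proof
      fix Y show "P Y = (if Y \<in> carrier_mat n n then Q Y else 0\<^sub>m n n)"
        using P peripheral_projection_spec_unique[OF P] by (cases "Y \<in> carrier_mat n n") simp_all
    qed
  qed
  thus ?thesis using X by simp
qed

end

lemma peripheral_projector_peripheral_projection:
  "peripheral_projector n L (peripheral_projection n L)"
proof -
  obtain Q where Q: "peripheral_projector n L Q" using peripheral_projector_exists by blast
  have Ql: "lin_map n Q" by (rule peripheral_projector_lin_map[OF Q])
  note eq = peripheral_projection_eq[OF Q]
  have "lin_map n (peripheral_projection n L)"
    using Ql unfolding lin_map_def by (simp add: eq)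
  thus ?thesis using Q eq gen_eigenspace_carrier unfolding peripheral_projector_def by simp
qed

lemma peripheral_projection_lin_map: "lin_map n (peripheral_projection n L)"
  by (rule peripheral_projector_lin_map[OF peripheral_projector_peripheral_projection])

lemma peripheral_projection_gen_eigenspace: "Z \<in> gen_eigenspace n L c \<Longrightarrow>
    peripheral_projection n L Z = (if cmod c = 1 then Z else 0\<^sub>m n n)"
  using peripheral_projector_peripheral_projection unfolding peripheral_projector_def by blast

lemma peripheral_projection_image: "X \<in> carrier_mat n n \<Longrightarrow> peripheral_projection n L X \<in> peripheral_span n L"
  using peripheral_projector_image[OF peripheral_projector_peripheral_projection] by blast

end

section \<open>Power-bounded linear maps\<close>

definition power_bounded :: "nat \<Rightarrow> (complex mat \<Rightarrow> complex mat) \<Rightarrow> bool" where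
  "power_bounded n L \<longleftrightarrow>
     (\<forall>X \<in> carrier_mat n n. \<exists>B. \<forall>k p q. p < n \<longrightarrow> q < n \<longrightarrow> cmod ((L ^^ k) X $$ (p, q)) \<le> B)"

lemma mat_nonzero_entry: assumes "Y \<in> carrier_mat n n" "Y \<noteq> 0\<^sub>m n n"
  obtains p q where "p < n" "q < n" "Y $$ (p, q) \<noteq> 0"
proof -
  have "\<exists>p q. p < n \<and> q < n \<and> Y $$ (p, q) \<noteq> 0"
  proof (rule ccontr)
    assume "\<not> ?thesis"
    hence "Y = 0\<^sub>m n n" using assms(1) by (intro eq_matI) auto
    thus False using assms(2) by simp
  qed
  thus ?thesis using that by blast
qed

lemma funpow_eigenvector: assumes L: "lin_map n L" and Y: "Y \<in> carrier_mat n n"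
  and eig: "L Y = c \<cdot>\<^sub>m Y"
  shows "(L ^^ k) Y = c ^ k \<cdot>\<^sub>m Y"
proof (induction k)
  case 0 thus ?case using Y by (intro eq_matI) auto
next
  case (Suc k)
  have "(L ^^ Suc k) Y = c ^ k \<cdot>\<^sub>m (c \<cdot>\<^sub>m Y)" using Suc lin_mapD(3)[OF L Y] eig by simp
  also have "\<dots> = c ^ Suc k \<cdot>\<^sub>m Y" using Y by (intro eq_matI) auto
  finally show ?case .
qed

lemma funpow_jordan_chain: assumes L: "lin_map n L" and Y: "Y \<in> carrier_mat n n"
  and W: "W = L Y - c \<cdot>\<^sub>m Y" and LW: "L W = c \<cdot>\<^sub>m W"
  shows "(L ^^ k) Y = c ^ k \<cdot>\<^sub>m Y + (of_nat k * c ^ (k - 1)) \<cdot>\<^sub>m W"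
proof (induction k)
  case 0 thus ?case using Y W lin_mapD(1)[OF L Y] by (intro eq_matI) (auto simp: minus_carrier_mat)
next
  case (Suc k)
  have WC: "W \<in> carrier_mat n n" using W Y by (simp add: minus_carrier_mat)
  have LY: "L Y = c \<cdot>\<^sub>m Y + W" using W Y lin_mapD(1)[OF L Y] by (intro eq_matI) auto
  have "(L ^^ Suc k) Y = c ^ k \<cdot>\<^sub>m (c \<cdot>\<^sub>m Y + W) + (of_nat k * c ^ (k - 1)) \<cdot>\<^sub>m (c \<cdot>\<^sub>m W)"
    using Suc lin_mapD[OF L] Y WC LY LW by simp
  also have "\<dots> = c ^ Suc k \<cdot>\<^sub>m Y + (of_nat (Suc k) * c ^ (Suc k - 1)) \<cdot>\<^sub>m W"
  proof -
    have "of_nat k * c ^ (k - 1) * c = of_nat k * c ^ k" by (cases k) (auto simp: mult.commute)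
    thus ?thesis using Y WC by (intro eq_matI) (auto simp: algebra_simps)
  qed
  finally show ?case .
qed

context
  fixes n L assumes L: "lin_map n L" and bounded: "power_bounded n L"
begin

lemma power_bounded_entry: assumes "X \<in> carrier_mat n n" "p < n" "q < n"
  shows "\<exists>B. \<forall>k. cmod ((L ^^ k) X $$ (p, q)) \<le> B"
  using bounded assms unfolding power_bounded_def by blast

lemma eigenvalue_norm_le_1: assumes Y: "Y \<in> carrier_mat n n" "Y \<noteq> 0\<^sub>m n n" and eig: "L Y = c \<cdot>\<^sub>m Y"
  shows "cmod c \<le> 1"
proof (rule ccontr)
  assume c: "\<not> cmod c \<le> 1"
  obtain p q where pq: "p < n" "q < n" "Y $$ (p, q) \<noteq> 0" using mat_nonzero_entry[OF Y] by blast
  obtain B where B: "\<And>k. cmod ((L ^^ k) Y $$ (p, q)) \<le> B" using power_bounded_entry[OF Y(1) pq(1,2)] by blast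
  obtain k where k: "B / cmod (Y $$ (p, q)) < cmod c ^ k"
    using real_arch_pow[of "cmod c" "B / cmod (Y $$ (p, q))"] c by auto
  have "cmod ((L ^^ k) Y $$ (p, q)) = cmod c ^ k * cmod (Y $$ (p, q))"
    using funpow_eigenvector[OF L Y(1) eig] pq Y(1) by (simp add: norm_mult norm_power)
  moreover have "B < cmod c ^ k * cmod (Y $$ (p, q))" using k pq(3) by (simp add: field_simps)
  ultimately show False using B[of k] by simp
qed

text \<open>At a unimodular eigenvalue a Jordan chain of length two would make \<open>L\<^sup>k Y\<close> grow linearly in \<open>k\<close>.\<close>

lemma unimodular_jordan_chain_trivial: assumes c: "cmod c = 1" and Y: "Y \<in> carrier_mat n n"
  and chain: "L (L Y - c \<cdot>\<^sub>m Y) - c \<cdot>\<^sub>m (L Y - c \<cdot>\<^sub>m Y) = 0\<^sub>m n n"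
  shows "L Y - c \<cdot>\<^sub>m Y = 0\<^sub>m n n"
proof (rule ccontr)
  define W where "W = L Y - c \<cdot>\<^sub>m Y"
  have WC: "W \<in> carrier_mat n n" using Y unfolding W_def by (simp add: minus_carrier_mat)
  assume "L Y - c \<cdot>\<^sub>m Y \<noteq> 0\<^sub>m n n"
  then obtain p q where pq: "p < n" "q < n" "W $$ (p, q) \<noteq> 0"
    using mat_nonzero_entry[OF WC] unfolding W_def by blast
  have LW: "L W = c \<cdot>\<^sub>m W" using chain lin_map_shift_eq_0_iff[OF L WC] unfolding W_def by simp
  obtain B where B: "\<And>k. cmod ((L ^^ k) Y $$ (p, q)) \<le> B" using power_bounded_entry[OF Y pq(1,2)] by blast
  obtain k :: nat where k: "(B + cmod (Y $$ (p, q))) / cmod (W $$ (p, q)) < of_nat k"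
    using reals_Archimedean2 by blast
  have "of_nat k * c ^ (k - 1) * W $$ (p, q) = (L ^^ k) Y $$ (p, q) - c ^ k * Y $$ (p, q)"
    using funpow_jordan_chain[OF L Y W_def LW] pq Y WC by simp
  hence "cmod (of_nat k * c ^ (k - 1) * W $$ (p, q)) \<le> cmod ((L ^^ k) Y $$ (p, q)) + cmod (c ^ k * Y $$ (p, q))"
    by (metis norm_triangle_ineq4)
  hence "of_nat k * cmod (W $$ (p, q)) \<le> cmod ((L ^^ k) Y $$ (p, q)) + cmod (c ^ k * Y $$ (p, q))"
    using c by (simp add: norm_mult norm_power)
  also have "\<dots> \<le> B + cmod (Y $$ (p, q))" using B[of k] c by (simp add: norm_mult norm_power)
  finally show False using k pq(3) by (simp add: field_simps)
qed

lemma unimodular_gen_eigenspace_eigenvector: assumes c: "cmod c = 1" and Z: "Z \<in> gen_eigenspace n L c"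
  shows "L Z = c \<cdot>\<^sub>m Z"
proof -
  let ?phi = "\<lambda>Y. L Y - c \<cdot>\<^sub>m Y"
  have ZC: "Z \<in> carrier_mat n n" and Zg: "(?phi ^^ (n * n)) Z = 0\<^sub>m n n"
    using Z unfolding gen_eigenspace_def by auto
  have "(?phi ^^ Suc j) Z = 0\<^sub>m n n \<Longrightarrow> ?phi Z = 0\<^sub>m n n" for j
  proof (induction j)
    case (Suc j)
    have "(?phi ^^ j) Z \<in> carrier_mat n n" by (rule lin_mapD(1)[OF lin_map_funpow[OF lin_map_shift[OF L]] ZC])
    thus ?case using Suc unimodular_jordan_chain_trivial[OF c] by simp
  qed simp
  moreover have "n * n = 0 \<Longrightarrow> ?phi Z = 0\<^sub>m n n" using ZC by (auto intro!: eq_matI)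
  ultimately have "?phi Z = 0\<^sub>m n n" using Zg by (cases "n * n") auto
  thus ?thesis using lin_map_shift_eq_0_iff[OF L ZC] by simp
qed

lemma gen_eigenspace_norm_le_1: assumes Z: "Z \<in> gen_eigenspace n L c" and Z0: "Z \<noteq> 0\<^sub>m n n"
  shows "cmod c \<le> 1"
proof -
  let ?phi = "\<lambda>Y. L Y - c \<cdot>\<^sub>m Y"
  have ZC: "Z \<in> carrier_mat n n" and Zg: "(?phi ^^ (n * n)) Z = 0\<^sub>m n n"
    using Z unfolding gen_eigenspace_def by auto
  \<comment> \<open>the last nonzero iterate of \<open>L - c\<close> on \<open>Z\<close> is an eigenvector\<close>
  have "(?phi ^^ k) Z = 0\<^sub>m n n \<Longrightarrow> \<exists>Y \<in> carrier_mat n n. Y \<noteq> 0\<^sub>m n n \<and> ?phi Y = 0\<^sub>m n n" for k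
  proof (induction k)
    case (Suc k)
    have "(?phi ^^ k) Z \<in> carrier_mat n n" by (rule lin_mapD(1)[OF lin_map_funpow[OF lin_map_shift[OF L]] ZC])
    thus ?case using Suc by (cases "(?phi ^^ k) Z = 0\<^sub>m n n") auto
  qed (use Z0 in simp)
  then obtain Y where "Y \<in> carrier_mat n n" "Y \<noteq> 0\<^sub>m n n" "?phi Y = 0\<^sub>m n n" using Zg by blast
  thus ?thesis using eigenvalue_norm_le_1 lin_map_shift_eq_0_iff[OF L] by blast
qed

lemma peripheral_subspace_eq_peripheral_span: "peripheral_subspace n L = peripheral_span n L"
proof -
  have "{X \<in> carrier_mat n n. \<exists>c. cmod c = 1 \<and> L X = c \<cdot>\<^sub>m X} = (\<Union>c\<in>{c. cmod c = 1}. gen_eigenspace n L c)"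
    using eigenvector_in_gen_eigenspace[OF L] unimodular_gen_eigenspace_eigenvector gen_eigenspace_carrier
    by blast
  thus ?thesis unfolding peripheral_subspace_def by simp
qed

end

section \<open>Kronecker products and tensor products of linear maps\<close>

lemma mat_kron_dims[simp]:
  "dim_row (mat_kron A B) = dim_row A * dim_row B" "dim_col (mat_kron A B) = dim_col A * dim_col B"
  unfolding mat_kron_def by auto

lemma mat_kron_carrier: "A \<in> carrier_mat d d \<Longrightarrow> B \<in> carrier_mat d' d' \<Longrightarrow> mat_kron A B \<in> carrier_mat (d * d') (d * d')"
  unfolding mat_kron_def by auto

lemma mat_kron_index: assumes "A \<in> carrier_mat d d" "B \<in> carrier_mat d' d'" "p < d * d'" "q < d * d'"
  shows "mat_kron A B $$ (p, q) = A $$ (p div d', q div d') * B $$ (p mod d', q mod d')"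
  using assms unfolding mat_kron_def by auto

lemma mat_kron_add_left: assumes "A1 \<in> carrier_mat d d" "A2 \<in> carrier_mat d d" "B \<in> carrier_mat d' d'"
  shows "mat_kron (A1 + A2) B = mat_kron A1 B + mat_kron A2 B"
  using assms index_div_mod_less
  by (intro eq_matI) (auto simp: mat_kron_index[of _ d _ d'] algebra_simps)

lemma mat_kron_smult_left: assumes "A \<in> carrier_mat d d" "B \<in> carrier_mat d' d'"
  shows "mat_kron (a \<cdot>\<^sub>m A) B = a \<cdot>\<^sub>m mat_kron A B"
  using assms index_div_mod_less by (intro eq_matI) (auto simp: mat_kron_index[of _ d _ d'])

lemma mat_kron_zero_left: assumes "B \<in> carrier_mat d' d'" shows "mat_kron (0\<^sub>m d d) B = 0\<^sub>m (d * d') (d * d')"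
  using assms index_div_mod_less by (intro eq_matI) (auto simp: mat_kron_index[of _ d _ d'])

lemma mat_kron_add_right: assumes "A \<in> carrier_mat d d" "B1 \<in> carrier_mat d' d'" "B2 \<in> carrier_mat d' d'"
  shows "mat_kron A (B1 + B2) = mat_kron A B1 + mat_kron A B2"
  using assms index_div_mod_less
  by (intro eq_matI) (auto simp: mat_kron_index[of _ d _ d'] algebra_simps)

lemma mat_kron_smult_right: assumes "A \<in> carrier_mat d d" "B \<in> carrier_mat d' d'"
  shows "mat_kron A (a \<cdot>\<^sub>m B) = a \<cdot>\<^sub>m mat_kron A B"
  using assms index_div_mod_less by (intro eq_matI) (auto simp: mat_kron_index[of _ d _ d'])

lemma mat_kron_zero_right: assumes "A \<in> carrier_mat d d" shows "mat_kron A (0\<^sub>m d' d') = 0\<^sub>m (d * d') (d * d')"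
  using assms index_div_mod_less by (intro eq_matI) (auto simp: mat_kron_index[of _ d _ d'])

lemma mat_unit_kron: "mat_unit (d * d') p q = mat_kron (mat_unit d (p div d') (q div d')) (mat_unit d' (p mod d') (q mod d'))"
proof (rule eq_matI)
  fix r s assume "r < dim_row (mat_kron (mat_unit d (p div d') (q div d')) (mat_unit d' (p mod d') (q mod d')))"
    "s < dim_col (mat_kron (mat_unit d (p div d') (q div d')) (mat_unit d' (p mod d') (q mod d')))"
  hence rs: "r < d * d'" "s < d * d'" by auto
  have "r = p \<longleftrightarrow> r div d' = p div d' \<and> r mod d' = p mod d'"
    "s = q \<longleftrightarrow> s div d' = q div d' \<and> s mod d' = q mod d'"
    by (metis div_mult_mod_eq)+
  thus "mat_unit (d * d') p q $$ (r, s) = mat_kron (mat_unit d (p div d') (q div d')) (mat_unit d' (p mod d') (q mod d')) $$ (r, s)"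
    using rs index_div_mod_less[OF rs(1)] index_div_mod_less[OF rs(2)]
    by (auto simp: mat_kron_index[of _ d _ d'] mat_unit_index)
qed auto

lemma tensor_map_dims[simp]:
  "dim_row (tensor_map d d' T S X) = d * d'" "dim_col (tensor_map d d' T S X) = d * d'"
  unfolding tensor_map_def by simp_all

lemma tensor_map_carrier[simp]: "tensor_map d d' T S X \<in> carrier_mat (d * d') (d * d')"
  unfolding tensor_map_def by simp

lemma tensor_map_index: "p < d * d' \<Longrightarrow> q < d * d' \<Longrightarrow> tensor_map d d' T S X $$ (p, q) =
  (\<Sum>i<d. \<Sum>j<d. \<Sum>k<d'. \<Sum>l<d'. X $$ (i * d' + k, j * d' + l) * mat_kron (T (mat_unit d i j)) (S (mat_unit d' k l)) $$ (p, q))"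
  unfolding tensor_map_def by simp

lemma lin_map_tensor_map: "lin_map (d * d') (tensor_map d d' T S)"
  unfolding lin_map_def
proof (intro conjI ballI allI)
  fix X Y :: "complex mat" assume X: "X \<in> carrier_mat (d * d') (d * d')" and Y: "Y \<in> carrier_mat (d * d') (d * d')"
  show "tensor_map d d' T S (X + Y) = tensor_map d d' T S X + tensor_map d d' T S Y"
  proof (rule eq_matI)
    fix p q assume "p < dim_row (tensor_map d d' T S X + tensor_map d d' T S Y)"
      "q < dim_col (tensor_map d d' T S X + tensor_map d d' T S Y)"
    hence pq: "p < d * d'" "q < d * d'" by auto
    have "tensor_map d d' T S (X + Y) $$ (p, q) = (\<Sum>i<d. \<Sum>j<d. \<Sum>k<d'. \<Sum>l<d'.
       X $$ (i * d' + k, j * d' + l) * mat_kron (T (mat_unit d i j)) (S (mat_unit d' k l)) $$ (p, q) +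
       Y $$ (i * d' + k, j * d' + l) * mat_kron (T (mat_unit d i j)) (S (mat_unit d' k l)) $$ (p, q))"
      unfolding tensor_map_index[OF pq] using X Y index_mult_add_less
      by (intro sum.cong refl) (simp add: distrib_right)
    also have "\<dots> = (tensor_map d d' T S X + tensor_map d d' T S Y) $$ (p, q)"
      using pq by (simp add: tensor_map_index sum.distrib)
    finally show "tensor_map d d' T S (X + Y) $$ (p, q) = (tensor_map d d' T S X + tensor_map d d' T S Y) $$ (p, q)" .
  qed auto
next
  fix X :: "complex mat" and c assume X: "X \<in> carrier_mat (d * d') (d * d')"
  show "tensor_map d d' T S (c \<cdot>\<^sub>m X) = c \<cdot>\<^sub>m tensor_map d d' T S X"
  proof (rule eq_matI)
    fix p q assume "p < dim_row (c \<cdot>\<^sub>m tensor_map d d' T S X)" "q < dim_col (c \<cdot>\<^sub>m tensor_map d d' T S X)"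
    hence pq: "p < d * d'" "q < d * d'" by auto
    have "tensor_map d d' T S (c \<cdot>\<^sub>m X) $$ (p, q) = (\<Sum>i<d. \<Sum>j<d. \<Sum>k<d'. \<Sum>l<d'.
       c * (X $$ (i * d' + k, j * d' + l) * mat_kron (T (mat_unit d i j)) (S (mat_unit d' k l)) $$ (p, q)))"
      unfolding tensor_map_index[OF pq] using X index_mult_add_less by (intro sum.cong refl) simp
    also have "\<dots> = (c \<cdot>\<^sub>m tensor_map d d' T S X) $$ (p, q)"
      using pq by (simp add: tensor_map_index sum_distrib_left)
    finally show "tensor_map d d' T S (c \<cdot>\<^sub>m X) $$ (p, q) = (c \<cdot>\<^sub>m tensor_map d d' T S X) $$ (p, q)" .
  qed auto
qed simp

lemma tensor_map_kron: assumes T: "lin_map d T" and S: "lin_map d' S"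
  and A: "A \<in> carrier_mat d d" and B: "B \<in> carrier_mat d' d'"
  shows "tensor_map d d' T S (mat_kron A B) = mat_kron (T A) (S B)"
proof (rule eq_matI)
  have TA: "T A \<in> carrier_mat d d" and SB: "S B \<in> carrier_mat d' d'" using lin_mapD(1)[OF T A] lin_mapD(1)[OF S B] .
  have TE: "T (mat_unit d i j) \<in> carrier_mat d d" for i j using lin_mapD(1)[OF T] by simp
  have SE: "S (mat_unit d' k l) \<in> carrier_mat d' d'" for k l using lin_mapD(1)[OF S] by simp
  fix p q assume "p < dim_row (mat_kron (T A) (S B))" "q < dim_col (mat_kron (T A) (S B))"
  hence pq: "p < d * d'" "q < d * d'" using TA SB by auto
  note b = index_div_mod_less[OF pq(1)] index_div_mod_less[OF pq(2)]
  \<comment> \<open>the quadruple sum factorizes into the two expansions of \<open>T A\<close> and \<open>S B\<close>\<close>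
  have "tensor_map d d' T S (mat_kron A B) $$ (p, q) = (\<Sum>i<d. \<Sum>j<d. \<Sum>k<d'. \<Sum>l<d'.
      (A $$ (i, j) * T (mat_unit d i j) $$ (p div d', q div d')) * (B $$ (k, l) * S (mat_unit d' k l) $$ (p mod d', q mod d')))"
    unfolding tensor_map_index[OF pq]
    by (intro sum.cong refl) (simp add: mat_kron_index[OF A B index_mult_add_less index_mult_add_less] mat_kron_index[OF TE SE pq])
  also have "\<dots> = (\<Sum>i<d. \<Sum>j<d. A $$ (i, j) * T (mat_unit d i j) $$ (p div d', q div d')) *
      (\<Sum>k<d'. \<Sum>l<d'. B $$ (k, l) * S (mat_unit d' k l) $$ (p mod d', q mod d'))"
    by (simp only: sum_distrib_right, simp only: sum_distrib_left)
  also have "\<dots> = mat_kron (T A) (S B) $$ (p, q)"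
    using lin_map_index[OF T A b(1) b(3)] lin_map_index[OF S B b(2) b(4)] mat_kron_index[OF TA SB pq] by simp
  finally show "tensor_map d d' T S (mat_kron A B) $$ (p, q) = mat_kron (T A) (S B) $$ (p, q)" .
qed (use lin_mapD(1)[OF T A] lin_mapD(1)[OF S B] in auto)

lemma tensor_map_one: assumes T: "lin_map d T" and X: "X \<in> carrier_mat d d"
  shows "tensor_map d 1 T id X = T X"
proof (rule eq_matI)
  have TE: "T (mat_unit d i j) \<in> carrier_mat d d" for i j using lin_mapD(1)[OF T] by simp
  fix p q assume "p < dim_row (T X)" "q < dim_col (T X)"
  hence pq: "p < d" "q < d" using lin_mapD(1)[OF T X] by auto
  have "tensor_map d 1 T id X $$ (p, q) = (\<Sum>i<d. \<Sum>j<d. X $$ (i, j) * T (mat_unit d i j) $$ (p, q))"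
    unfolding tensor_map_def using pq TE
    by (auto simp: mat_kron_index[OF TE mat_unit_carrier] mat_unit_index intro!: sum.cong)
  also have "\<dots> = T X $$ (p, q)" by (rule lin_map_index[OF T X pq, symmetric])
  finally show "tensor_map d 1 T id X $$ (p, q) = T X $$ (p, q)" .
qed (use lin_mapD(1)[OF T X] in auto)

lemma tensor_subspace_mono: "U \<subseteq> U' \<Longrightarrow> V \<subseteq> V' \<Longrightarrow> tensor_subspace d d' U V \<subseteq> tensor_subspace d d' U' V'"
  unfolding tensor_subspace_def by (intro mat_span_mono) blast

lemma mat_subspace_kron_left: assumes W: "mat_subspace (d * d') W" and B: "B \<in> carrier_mat d' d'"
  shows "mat_subspace d {A \<in> carrier_mat d d. mat_kron A B \<in> W}"
  unfolding mat_subspace_def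
proof (intro conjI ballI allI)
  show "0\<^sub>m d d \<in> {A \<in> carrier_mat d d. mat_kron A B \<in> W}"
    using mat_kron_zero_left[OF B] mat_subspaceD(2)[OF W] by simp
  show "X + Y \<in> {A \<in> carrier_mat d d. mat_kron A B \<in> W}"
    if "X \<in> {A \<in> carrier_mat d d. mat_kron A B \<in> W}" "Y \<in> {A \<in> carrier_mat d d. mat_kron A B \<in> W}" for X Y
    using that mat_kron_add_left[where d = d, OF _ _ B] mat_subspaceD(3)[OF W] by simp
  show "c \<cdot>\<^sub>m X \<in> {A \<in> carrier_mat d d. mat_kron A B \<in> W}"
    if "X \<in> {A \<in> carrier_mat d d. mat_kron A B \<in> W}" for X c
    using that mat_kron_smult_left[where d = d, OF _ B] mat_subspaceD(4)[OF W] by simp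
qed blast

lemma mat_subspace_kron_right: assumes W: "mat_subspace (d * d') W" and A: "A \<in> carrier_mat d d"
  shows "mat_subspace d' {B \<in> carrier_mat d' d'. mat_kron A B \<in> W}"
  unfolding mat_subspace_def
proof (intro conjI ballI allI)
  show "0\<^sub>m d' d' \<in> {B \<in> carrier_mat d' d'. mat_kron A B \<in> W}"
    using mat_kron_zero_right[OF A] mat_subspaceD(2)[OF W] by simp
  show "X + Y \<in> {B \<in> carrier_mat d' d'. mat_kron A B \<in> W}"
    if "X \<in> {B \<in> carrier_mat d' d'. mat_kron A B \<in> W}" "Y \<in> {B \<in> carrier_mat d' d'. mat_kron A B \<in> W}" for X Y
    using that mat_kron_add_right[where d' = d', OF A] mat_subspaceD(3)[OF W] by simp
  show "c \<cdot>\<^sub>m X \<in> {B \<in> carrier_mat d' d'. mat_kron A B \<in> W}"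
    if "X \<in> {B \<in> carrier_mat d' d'. mat_kron A B \<in> W}" for X c
    using that mat_kron_smult_right[where d' = d', OF A] mat_subspaceD(4)[OF W] by simp
qed blast

lemma mat_kron_mem_tensor_subspace:
  assumes U: "U \<subseteq> carrier_mat d d" and V: "V \<subseteq> carrier_mat d' d'"
    and A: "A \<in> mat_span d U" and B: "B \<in> mat_span d' V"
  shows "mat_kron A B \<in> tensor_subspace d d' U V"
proof -
  let ?W = "tensor_subspace d d' U V"
  have W: "mat_subspace (d * d') ?W" unfolding tensor_subspace_def by (rule mat_subspace_span)
  have base: "mat_kron A' B' \<in> ?W" if "A' \<in> U" "B' \<in> V" for A' B'
    unfolding tensor_subspace_def using that U V by (intro mat_span_base) (auto intro: mat_kron_carrier)
  have half: "mat_kron A' B' \<in> ?W" if A': "A' \<in> mat_span d U" and B': "B' \<in> V" for A' B'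
  proof -
    have "U \<subseteq> {A \<in> carrier_mat d d. mat_kron A B' \<in> ?W}" using base B' U by blast
    hence "mat_span d U \<subseteq> {A \<in> carrier_mat d d. mat_kron A B' \<in> ?W}"
      by (intro mat_span_minimal mat_subspace_kron_left[OF W]) (use B' V in blast)
    thus ?thesis using A' by blast
  qed
  have AC: "A \<in> carrier_mat d d" using A mat_subspaceD(1)[OF mat_subspace_span] by blast
  have "V \<subseteq> {B \<in> carrier_mat d' d'. mat_kron A B \<in> ?W}" using half A V by blast
  hence "mat_span d' V \<subseteq> {B \<in> carrier_mat d' d'. mat_kron A B \<in> ?W}"
    by (intro mat_span_minimal mat_subspace_kron_right[OF W AC])
  thus ?thesis using B by blast
qed

lemma carrier_subset_tensor_subspace:
  assumes "U \<subseteq> carrier_mat d d" "V \<subseteq> carrier_mat d' d'"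
    and "carrier_mat d d \<subseteq> mat_span d U" "carrier_mat d' d' \<subseteq> mat_span d' V"
  shows "carrier_mat (d * d') (d * d') \<subseteq> tensor_subspace d d' U V"
proof -
  have "mat_unit (d * d') p q \<in> tensor_subspace d d' U V" for p q
    unfolding mat_unit_kron using assms by (intro mat_kron_mem_tensor_subspace) auto
  hence "mat_span (d * d') {mat_unit (d * d') p q | p q. p < d * d' \<and> q < d * d'} \<subseteq> tensor_subspace d d' U V"
    unfolding tensor_subspace_def by (intro mat_span_subset_span) blast
  thus ?thesis using carrier_subset_span_mat_units by blast
qed

lemma tensor_map_mem_tensor_subspace: assumes T: "lin_map d T" and S: "lin_map d' S"
  and X: "X \<in> carrier_mat (d * d') (d * d')"
  shows "tensor_map d d' T S X \<in> tensor_subspace d d' (T ` carrier_mat d d) (S ` carrier_mat d' d')"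
proof -
  let ?W = "tensor_subspace d d' (T ` carrier_mat d d) (S ` carrier_mat d' d')"
  have "tensor_map d d' T S (mat_unit (d * d') p q) \<in> ?W" for p q
  proof -
    let ?E = "mat_unit d (p div d') (q div d')" and ?E' = "mat_unit d' (p mod d') (q mod d')"
    have "tensor_map d d' T S (mat_unit (d * d') p q) = mat_kron (T ?E) (S ?E')"
      unfolding mat_unit_kron by (rule tensor_map_kron[OF T S mat_unit_carrier mat_unit_carrier])
    also have "\<dots> \<in> ?W" unfolding tensor_subspace_def
      by (rule mat_span_base) (use mat_unit_carrier in blast,
        auto intro!: mat_kron_carrier lin_mapD(1)[OF T] lin_mapD(1)[OF S])
    finally show ?thesis .
  qed
  hence "mat_span (d * d') {mat_unit (d * d') p q | p q. p < d * d' \<and> q < d * d'}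
      \<subseteq> {Y \<in> carrier_mat (d * d') (d * d'). tensor_map d d' T S Y \<in> ?W}"
    unfolding tensor_subspace_def
    by (intro mat_span_minimal mat_subspace_preimage[OF lin_map_tensor_map] mat_subspace_span) auto
  thus ?thesis using carrier_subset_span_mat_units X by blast
qed

lemma tensor_map_kron_shift: assumes T: "lin_map d T" and S: "lin_map d' S"
  and X: "X \<in> carrier_mat d d" and Y: "Y \<in> carrier_mat d' d'"
  shows "tensor_map d d' T S (mat_kron X Y) - (c * e) \<cdot>\<^sub>m mat_kron X Y
    = mat_kron (T X - c \<cdot>\<^sub>m X) (S Y - e \<cdot>\<^sub>m Y) + e \<cdot>\<^sub>m mat_kron (T X - c \<cdot>\<^sub>m X) Y
      + c \<cdot>\<^sub>m mat_kron X (S Y - e \<cdot>\<^sub>m Y)"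
proof -
  have TX: "T X \<in> carrier_mat d d" and SY: "S Y \<in> carrier_mat d' d'" using lin_mapD(1)[OF T X] lin_mapD(1)[OF S Y] .
  have U: "T X - c \<cdot>\<^sub>m X \<in> carrier_mat d d" and W: "S Y - e \<cdot>\<^sub>m Y \<in> carrier_mat d' d'"
    using X Y by (auto simp: minus_carrier_mat)
  show ?thesis unfolding tensor_map_kron[OF T S X Y]
  proof (rule eq_matI)
    fix p q assume "p < dim_row (mat_kron (T X - c \<cdot>\<^sub>m X) (S Y - e \<cdot>\<^sub>m Y) + e \<cdot>\<^sub>m mat_kron (T X - c \<cdot>\<^sub>m X) Y + c \<cdot>\<^sub>m mat_kron X (S Y - e \<cdot>\<^sub>m Y))"
      "q < dim_col (mat_kron (T X - c \<cdot>\<^sub>m X) (S Y - e \<cdot>\<^sub>m Y) + e \<cdot>\<^sub>m mat_kron (T X - c \<cdot>\<^sub>m X) Y + c \<cdot>\<^sub>m mat_kron X (S Y - e \<cdot>\<^sub>m Y))"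
    hence pq: "p < d * d'" "q < d * d'" using X Y by auto
    note b = index_div_mod_less[OF pq(1)] index_div_mod_less[OF pq(2)]
    show "(mat_kron (T X) (S Y) - (c * e) \<cdot>\<^sub>m mat_kron X Y) $$ (p, q) =
      (mat_kron (T X - c \<cdot>\<^sub>m X) (S Y - e \<cdot>\<^sub>m Y) + e \<cdot>\<^sub>m mat_kron (T X - c \<cdot>\<^sub>m X) Y + c \<cdot>\<^sub>m mat_kron X (S Y - e \<cdot>\<^sub>m Y)) $$ (p, q)"
      using pq b TX SY X Y U W
      by (simp add: mat_kron_index[OF TX SY pq] mat_kron_index[OF X Y pq] mat_kron_index[OF U W pq]
          mat_kron_index[OF U Y pq] mat_kron_index[OF X W pq] algebra_simps)
  qed (use TX SY X Y U W in auto)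
qed

lemma nat_square_product_le_sum: fixes d d' i j :: nat assumes "(d * d') * (d * d') \<le> i + j"
  shows "d * d \<le> i \<or> d' * d' \<le> j"
proof (rule ccontr)
  assume "\<not> ?thesis"
  hence ij: "i < d * d" "j < d' * d'" by auto
  then obtain a b where a: "d * d = Suc a" and b: "d' * d' = Suc b" by (metis less_nat_zero_code not0_implies_Suc)
  have "(d * d') * (d * d') = (d * d) * (d' * d')" by (simp add: ac_simps)
  also have "\<dots> = a * b + a + b + 1" unfolding a b by simp
  finally show False using assms ij a b by simp
qed

text \<open>With \<open>U = T - c\<close> and \<open>W = S - e\<close> one has \<open>T \<otimes> S - c e = U \<otimes> W + e (U \<otimes> 1) + c (1 \<otimes> W)\<close>,
  so the \<open>m\<close>-th power of \<open>T \<otimes> S - c e\<close> maps \<open>A \<otimes> B\<close> into the span of the \<open>U\<^sup>i A \<otimes> W\<^sup>j B\<close>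
  with \<open>i + j \<ge> m\<close>; these vanish once \<open>i \<ge> d\<^sup>2\<close> or \<open>j \<ge> d'\<^sup>2\<close>.\<close>

lemma gen_eigenspace_kron: assumes T: "lin_map d T" and S: "lin_map d' S"
  and A: "A \<in> gen_eigenspace d T c" and B: "B \<in> gen_eigenspace d' S e"
  shows "mat_kron A B \<in> gen_eigenspace (d * d') (tensor_map d d' T S) (c * e)"
proof -
  define U where "U = (\<lambda>Y. T Y - c \<cdot>\<^sub>m Y)"
  define W where "W = (\<lambda>Y. S Y - e \<cdot>\<^sub>m Y)"
  define P where "P = (\<lambda>Y. tensor_map d d' T S Y - (c * e) \<cdot>\<^sub>m Y)"
  define K where "K i j = mat_kron ((U ^^ i) A) ((W ^^ j) B)" for i j
  define G where "G m = mat_span (d * d') {K i j | i j. m \<le> i + j}" for m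
  have AC: "A \<in> carrier_mat d d" and BC: "B \<in> carrier_mat d' d'"
    using A B by (auto dest: gen_eigenspace_carrier)
  have UC: "(U ^^ i) A \<in> carrier_mat d d" for i
    unfolding U_def by (rule lin_mapD(1)[OF lin_map_funpow[OF lin_map_shift[OF T]] AC])
  have WC: "(W ^^ j) B \<in> carrier_mat d' d'" for j
    unfolding W_def by (rule lin_mapD(1)[OF lin_map_funpow[OF lin_map_shift[OF S]] BC])
  have KG: "K i j \<in> G m" if "m \<le> i + j" for i j m
    unfolding G_def K_def using that by (intro mat_span_base) (auto intro!: mat_kron_carrier UC WC)
  have step: "P (K i j) \<in> G (Suc m)" if "m \<le> i + j" for i j m
  proof -
    have "P (K i j) = K (Suc i) (Suc j) + e \<cdot>\<^sub>m K (Suc i) j + c \<cdot>\<^sub>m K i (Suc j)"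
      unfolding K_def P_def using tensor_map_kron_shift[OF T S UC WC] by (simp add: U_def W_def)
    thus ?thesis using that KG mat_subspaceD(3,4)[OF mat_subspace_span] unfolding G_def by simp
  qed
  have "(P ^^ m) (K 0 0) \<in> G m" for m
  proof (induction m)
    case 0 show ?case using KG[of 0 0 0] by simp
  next
    case (Suc m)
    have "G m \<subseteq> {Y \<in> carrier_mat (d * d') (d * d'). P Y \<in> G (Suc m)}"
      unfolding G_def[of m] using step mat_kron_carrier[OF UC WC] unfolding K_def
      by (intro mat_span_minimal mat_subspace_preimage)
        (auto simp: P_def G_def intro: lin_map_shift[OF lin_map_tensor_map] mat_subspace_span)
    thus ?case using Suc by auto
  qed
  moreover have "K i j = 0\<^sub>m (d * d') (d * d')" if "(d * d') * (d * d') \<le> i + j" for i j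
  proof -
    have "(U ^^ i) A = 0\<^sub>m d d \<or> (W ^^ j) B = 0\<^sub>m d' d'"
      using nat_square_product_le_sum[OF that] gen_eigenspace_funpow_shift[OF T A]
        gen_eigenspace_funpow_shift[OF S B] unfolding U_def W_def by blast
    thus ?thesis unfolding K_def using mat_kron_zero_left[OF WC] mat_kron_zero_right[OF UC] by auto
  qed
  hence "G ((d * d') * (d * d')) \<subseteq> {0\<^sub>m (d * d') (d * d')}"
    unfolding G_def by (intro mat_span_minimal mat_subspace_zero) auto
  ultimately have "(P ^^ ((d * d') * (d * d'))) (mat_kron A B) = 0\<^sub>m (d * d') (d * d')"
    unfolding K_def by auto
  thus ?thesis unfolding gen_eigenspace_def P_def using mat_kron_carrier[OF AC BC] by simp
qed

section \<open>Quantum channels are power-bounded\<close>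

definition two_point_vec :: "nat \<Rightarrow> nat \<Rightarrow> nat \<Rightarrow> complex \<Rightarrow> complex \<Rightarrow> complex vec" where
  "two_point_vec n p q a b = vec n (\<lambda>i. (if i = p then a else 0) + (if i = q then b else 0))"

lemma sum_if_eq_mult: fixes p n :: nat
  shows "p < n \<Longrightarrow> (\<Sum>s<n. f s * (if s = p then a else 0)) = f p * (a :: complex)"
  by (simp add: if_distrib[of "(*) _"] cong: if_cong)

lemma quadratic_form_two_point_vec: assumes A: "A \<in> carrier_mat n n" and pq: "p < n" "q < n"
  shows "conjugate (two_point_vec n p q a b) \<bullet> (A *\<^sub>v two_point_vec n p q a b)
       = cnj a * (a * A $$ (p, p) + b * A $$ (p, q)) + cnj b * (a * A $$ (q, p) + b * A $$ (q, q))"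
proof -
  have Av: "(A *\<^sub>v two_point_vec n p q a b) $ r = a * A $$ (r, p) + b * A $$ (r, q)" if r: "r < n" for r
  proof -
    have "(A *\<^sub>v two_point_vec n p q a b) $ r = (\<Sum>s<n. A $$ (r, s) * ((if s = p then a else 0) + (if s = q then b else 0)))"
      using A r unfolding two_point_vec_def by (simp add: scalar_prod_def atLeast0LessThan)
    also have "\<dots> = (\<Sum>s<n. A $$ (r, s) * (if s = p then a else 0)) + (\<Sum>s<n. A $$ (r, s) * (if s = q then b else 0))"
      by (simp only: distrib_left sum.distrib)
    also have "\<dots> = a * A $$ (r, p) + b * A $$ (r, q)" using pq by (simp add: sum_if_eq_mult mult.commute)
    finally show ?thesis .
  qed
  have "conjugate (two_point_vec n p q a b) \<bullet> (A *\<^sub>v two_point_vec n p q a b)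
      = (\<Sum>r<n. cnj ((if r = p then a else 0) + (if r = q then b else 0)) * (a * A $$ (r, p) + b * A $$ (r, q)))"
    using A Av unfolding two_point_vec_def by (simp add: scalar_prod_def atLeast0LessThan)
  also have "\<dots> = (\<Sum>r<n. (a * A $$ (r, p) + b * A $$ (r, q)) * (if r = p then cnj a else 0))
                + (\<Sum>r<n. (a * A $$ (r, p) + b * A $$ (r, q)) * (if r = q then cnj b else 0))"
    unfolding sum.distrib[symmetric] by (intro sum.cong refl) (simp add: algebra_simps)
  also have "\<dots> = (a * A $$ (p, p) + b * A $$ (p, q)) * cnj a + (a * A $$ (q, p) + b * A $$ (q, q)) * cnj b"
    using pq by (simp only: sum_if_eq_mult)
  also have "\<dots> = cnj a * (a * A $$ (p, p) + b * A $$ (p, q)) + cnj b * (a * A $$ (q, p) + b * A $$ (q, q))"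
    by (simp only: mult.commute)
  finally show ?thesis .
qed

lemma psd_quadratic_form_two_point: assumes "mat_psd n A" "p < n" "q < n"
  shows "Im (cnj a * (a * A $$ (p, p) + b * A $$ (p, q)) + cnj b * (a * A $$ (q, p) + b * A $$ (q, q))) = 0
       \<and> Re (cnj a * (a * A $$ (p, p) + b * A $$ (p, q)) + cnj b * (a * A $$ (q, p) + b * A $$ (q, q))) \<ge> 0"
proof -
  have A: "A \<in> carrier_mat n n" and psd: "\<forall>v \<in> carrier_vec n. Im (conjugate v \<bullet> (A *\<^sub>v v)) = 0 \<and> Re (conjugate v \<bullet> (A *\<^sub>v v)) \<ge> 0"
    using assms(1) unfolding mat_psd_def Let_def by auto
  have "two_point_vec n p q a b \<in> carrier_vec n" unfolding two_point_vec_def by simp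
  from psd[rule_format, OF this] show ?thesis unfolding quadratic_form_two_point_vec[OF A assms(2,3)] .
qed

lemma psd_diag: assumes "mat_psd n A" "p < n" shows "Im (A $$ (p, p)) = 0" "Re (A $$ (p, p)) \<ge> 0"
  using psd_quadratic_form_two_point[OF assms assms(2), of 1 0] by auto

lemma psd_hermitian: assumes P: "mat_psd n A" and pq: "p < n" "q < n"
  shows "A $$ (q, p) = cnj (A $$ (p, q))"
proof -
  have "Im (A $$ (p, p) + A $$ (p, q) + (A $$ (q, p) + A $$ (q, q))) = 0"
    "Im (A $$ (p, p) + \<i> * A $$ (p, q) + (- \<i>) * (A $$ (q, p) + \<i> * A $$ (q, q))) = 0"
    using psd_quadratic_form_two_point[OF P pq, of 1 1] psd_quadratic_form_two_point[OF P pq, of 1 "\<i>"] by simp_all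
  thus ?thesis using psd_diag(1)[OF P] pq by (simp add: complex_eq_iff)
qed

lemma psd_offdiag_le: assumes P: "mat_psd n A" and pq: "p < n" "q < n"
  shows "2 * cmod (A $$ (p, q)) \<le> Re (A $$ (p, p)) + Re (A $$ (q, q))"
proof (cases "A $$ (p, q) = 0")
  case True thus ?thesis using psd_diag[OF P] pq by auto
next
  case False
  define a where "a = A $$ (p, q)"
  have an: "cmod a > 0" using False unfolding a_def by simp
  \<comment> \<open>test the form on \<open>e\<^sub>p - w e\<^sub>q\<close> with the phase \<open>w\<close> that makes \<open>w a\<close> real and positive\<close>
  define w where "w = cnj a / of_real (cmod a)"
  have wa: "w * a = of_real (cmod a)" unfolding w_def using an
    by (simp add: complex_norm_square[symmetric] power2_eq_square field_simps mult.commute)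
  have ww: "cnj w * w = 1" unfolding w_def using an
    by (simp add: complex_norm_square[symmetric] power2_eq_square field_simps)
  have h: "A $$ (q, p) = cnj a" using psd_hermitian[OF P pq] unfolding a_def .
  have "Re (cnj 1 * (1 * A $$ (p, p) + (- w) * A $$ (p, q)) + cnj (- w) * (1 * A $$ (q, p) + (- w) * A $$ (q, q))) \<ge> 0"
    using psd_quadratic_form_two_point[OF P pq, of 1 "- w"] by blast
  also have "cnj 1 * (1 * A $$ (p, p) + (- w) * A $$ (p, q)) + cnj (- w) * (1 * A $$ (q, p) + (- w) * A $$ (q, q))
     = A $$ (p, p) + A $$ (q, q) * (cnj w * w) - w * a - cnj (w * a)"
    unfolding h a_def[symmetric] by (simp add: algebra_simps)
  also have "\<dots> = A $$ (p, p) + A $$ (q, q) - 2 * of_real (cmod a)" unfolding ww wa by simp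
  finally show ?thesis unfolding a_def by simp
qed

lemma psd_entry_le_trace: assumes P: "mat_psd n A" and pq: "p < n" "q < n"
  shows "cmod (A $$ (p, q)) \<le> Re (mat_trace A)"
proof -
  have A: "A \<in> carrier_mat n n" using P unfolding mat_psd_def by auto
  have tr: "Re (mat_trace A) = (\<Sum>i<n. Re (A $$ (i, i)))" using A unfolding mat_trace_def by (simp add: Re_sum)
  have sub: "(\<Sum>i\<in>{p, q}. Re (A $$ (i, i))) \<le> (\<Sum>i<n. Re (A $$ (i, i)))"
    by (rule sum_mono2) (use pq psd_diag(2)[OF P] in auto)
  show ?thesis
  proof (cases "p = q")
    case True
    have "cmod (A $$ (p, p)) = Re (A $$ (p, p))" using psd_diag[OF P pq(1)] by (simp add: cmod_eq_Re)
    thus ?thesis using sub True tr by simp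
  next
    case False
    have "cmod (A $$ (p, q)) \<le> Re (A $$ (p, p)) + Re (A $$ (q, q))"
      using psd_offdiag_le[OF P pq] psd_diag(2)[OF P pq(1)] psd_diag(2)[OF P pq(2)] by linarith
    thus ?thesis using sub False tr by simp
  qed
qed

definition rank_one_mat :: "nat \<Rightarrow> (nat \<Rightarrow> complex) \<Rightarrow> complex mat" where
  "rank_one_mat n w = mat n n (\<lambda>(r, s). w r * cnj (w s))"

lemma rank_one_mat_carrier[simp]: "rank_one_mat n w \<in> carrier_mat n n"
  unfolding rank_one_mat_def by simp

lemma rank_one_mat_psd: "mat_psd n (rank_one_mat n w)"
  unfolding mat_psd_def Let_def
proof (intro conjI ballI rank_one_mat_carrier)
  fix v :: "complex vec" assume v: "v \<in> carrier_vec n"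
  define z where "z = (\<Sum>r<n. cnj (v $ r) * w r)"
  have "conjugate v \<bullet> (rank_one_mat n w *\<^sub>v v) = (\<Sum>r<n. cnj (v $ r) * (\<Sum>s<n. w r * cnj (w s) * v $ s))"
    using v unfolding rank_one_mat_def by (simp add: scalar_prod_def atLeast0LessThan)
  also have "\<dots> = z * (\<Sum>s<n. cnj (w s) * v $ s)"
    unfolding z_def sum_distrib_right by (intro sum.cong refl) (simp add: sum_distrib_left mult.assoc)
  also have "(\<Sum>s<n. cnj (w s) * v $ s) = cnj z" unfolding z_def by (simp add: mult.commute)
  also have "z * cnj z = of_real ((cmod z)\<^sup>2)" by (rule complex_norm_square[symmetric])
  finally have "conjugate v \<bullet> (rank_one_mat n w *\<^sub>v v) = of_real ((cmod z)\<^sup>2)" .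
  thus "Im (conjugate v \<bullet> (rank_one_mat n w *\<^sub>v v)) = 0" "0 \<le> Re (conjugate v \<bullet> (rank_one_mat n w *\<^sub>v v))"
    by simp_all
qed

definition polarization_vec :: "nat \<Rightarrow> nat \<Rightarrow> nat \<Rightarrow> nat \<Rightarrow> complex" where
  "polarization_vec i j m r = (if r = i then 1 else 0) + \<i> ^ m * (if r = j then 1 else 0)"

lemma polarization_identity: "(\<Sum>m<4. \<i> ^ m / 4 * ((x + \<i> ^ m * y) * (u + cnj (\<i> ^ m) * v))) = x * v"
proof -
  have "\<i> ^ 3 = - \<i>" by (simp add: eval_nat_numeral)
  thus ?thesis by (simp add: eval_nat_numeral field_simps)
qed

lemma mat_unit_polarization:
  "mat_unit n i j = mat_sum n (\<lambda>m. (\<i> ^ m / 4) \<cdot>\<^sub>m rank_one_mat n (polarization_vec i j m)) {..<4}"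
proof (rule eq_matI)
  fix r s assume "r < dim_row (mat_sum n (\<lambda>m. (\<i> ^ m / 4) \<cdot>\<^sub>m rank_one_mat n (polarization_vec i j m)) {..<4})"
    "s < dim_col (mat_sum n (\<lambda>m. (\<i> ^ m / 4) \<cdot>\<^sub>m rank_one_mat n (polarization_vec i j m)) {..<4})"
  hence rs: "r < n" "s < n" by auto
  have "mat_sum n (\<lambda>m. (\<i> ^ m / 4) \<cdot>\<^sub>m rank_one_mat n (polarization_vec i j m)) {..<4} $$ (r, s)
      = (\<Sum>m<4. \<i> ^ m / 4 * (((if r = i then 1 else 0) + \<i> ^ m * (if r = j then 1 else 0))
          * ((if s = i then 1 else 0) + cnj (\<i> ^ m) * (if s = j then 1 else 0))))"
    using rs by (simp add: mat_sum_index rank_one_mat_def polarization_vec_def)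
  also have "\<dots> = (if r = i then 1 else 0) * (if s = j then 1 else 0)"
    by (rule polarization_identity)
  finally show "mat_unit n i j $$ (r, s) = mat_sum n (\<lambda>m. (\<i> ^ m / 4) \<cdot>\<^sub>m rank_one_mat n (polarization_vec i j m)) {..<4} $$ (r, s)"
    using rs by (simp add: mat_unit_index)
qed auto

context
  fixes d T assumes T: "quantum_channel d T"
begin

lemma quantum_channel_lin_map: "lin_map d T"
  using T unfolding quantum_channel_def by simp

lemma quantum_channel_psd: assumes P: "mat_psd d X" shows "mat_psd d (T X)"
proof -
  have X: "X \<in> carrier_mat d d" using P unfolding mat_psd_def by simp
  have "\<forall>k X. mat_psd (d * k) X \<longrightarrow> mat_psd (d * k) (tensor_map d k T id X)"
    using T unfolding quantum_channel_def completely_positive_def by simp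
  moreover have "mat_psd (d * 1) X" using P by simp
  ultimately have "mat_psd (d * 1) (tensor_map d 1 T id X)" by blast
  thus ?thesis using tensor_map_one[OF quantum_channel_lin_map X] by simp
qed

lemma quantum_channel_funpow_trace: "X \<in> carrier_mat d d \<Longrightarrow> mat_trace ((T ^^ k) X) = mat_trace X"
proof (induction k)
  case (Suc k)
  have "(T ^^ k) X \<in> carrier_mat d d" using lin_mapD(1)[OF lin_map_funpow[OF quantum_channel_lin_map] Suc(2)] .
  thus ?case using Suc T unfolding quantum_channel_def trace_preserving_def by simp
qed simp

text \<open>Powers of \<open>T\<close> keep positive matrices positive and preserve their trace, which bounds their
  entries; every matrix unit is a combination of four positive rank-one matrices.\<close>

lemma quantum_channel_funpow_mat_unit_bound: assumes pq: "p < d" "q < d"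
  shows "cmod ((T ^^ k) (mat_unit d i j) $$ (p, q)) \<le> (\<Sum>m<4. Re (mat_trace (rank_one_mat d (polarization_vec i j m))) / 4)"
proof -
  let ?R = "\<lambda>m. rank_one_mat d (polarization_vec i j m)"
  have Tk: "lin_map d (T ^^ k)" by (rule lin_map_funpow[OF quantum_channel_lin_map])
  have "(T ^^ k) (mat_unit d i j) = mat_sum d (\<lambda>m. (T ^^ k) ((\<i> ^ m / 4) \<cdot>\<^sub>m ?R m)) {..<4}"
    unfolding mat_unit_polarization[of d i j] by (rule lin_map_mat_sum[OF Tk]) auto
  also have "\<dots> = mat_sum d (\<lambda>m. (\<i> ^ m / 4) \<cdot>\<^sub>m (T ^^ k) (?R m)) {..<4}"
    by (rule mat_sum_cong) (rule lin_mapD(3)[OF Tk], simp)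
  finally have e: "(T ^^ k) (mat_unit d i j) = mat_sum d (\<lambda>m. (\<i> ^ m / 4) \<cdot>\<^sub>m (T ^^ k) (?R m)) {..<4}" .
  have "dim_row ((T ^^ k) (?R m)) = d \<and> dim_col ((T ^^ k) (?R m)) = d" for m
    using lin_mapD(1)[OF Tk rank_one_mat_carrier] by auto
  hence "(T ^^ k) (mat_unit d i j) $$ (p, q) = (\<Sum>m<4. \<i> ^ m / 4 * (T ^^ k) (?R m) $$ (p, q))"
    unfolding e mat_sum_index[OF pq] using pq by simp
  hence "cmod ((T ^^ k) (mat_unit d i j) $$ (p, q)) \<le> (\<Sum>m<4. cmod (\<i> ^ m / 4 * (T ^^ k) (?R m) $$ (p, q)))"
    by (simp only: norm_sum)
  also have "\<dots> \<le> (\<Sum>m<4. Re (mat_trace (?R m)) / 4)"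
  proof (rule sum_mono)
    fix m :: nat
    have "mat_psd d ((T ^^ k) (?R m))"
      by (induction k) (auto simp: rank_one_mat_psd intro: quantum_channel_psd)
    hence "cmod ((T ^^ k) (?R m) $$ (p, q)) \<le> Re (mat_trace ((T ^^ k) (?R m)))"
      by (rule psd_entry_le_trace[OF _ pq])
    thus "cmod (\<i> ^ m / 4 * (T ^^ k) (?R m) $$ (p, q)) \<le> Re (mat_trace (?R m)) / 4"
      using quantum_channel_funpow_trace[OF rank_one_mat_carrier] by (simp add: norm_mult norm_divide norm_power)
  qed
  finally show ?thesis .
qed

lemma quantum_channel_power_bounded: "power_bounded d T"
  unfolding power_bounded_def
proof (intro ballI exI allI impI)
  fix X :: "complex mat" and k p q assume X: "X \<in> carrier_mat d d" and pq: "p < d" "q < d"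
  let ?\<beta> = "\<lambda>i j. \<Sum>m<4. Re (mat_trace (rank_one_mat d (polarization_vec i j m))) / 4"
  have "cmod ((T ^^ k) X $$ (p, q)) = cmod (\<Sum>i<d. \<Sum>j<d. X $$ (i, j) * (T ^^ k) (mat_unit d i j) $$ (p, q))"
    using lin_map_index[OF lin_map_funpow[OF quantum_channel_lin_map] X pq] by simp
  also have "\<dots> \<le> (\<Sum>i<d. \<Sum>j<d. cmod (X $$ (i, j) * (T ^^ k) (mat_unit d i j) $$ (p, q)))"
    by (rule order.trans[OF norm_sum sum_mono[OF norm_sum]])
  also have "\<dots> \<le> (\<Sum>i<d. \<Sum>j<d. cmod (X $$ (i, j)) * ?\<beta> i j)"
    by (intro sum_mono) (auto simp: norm_mult intro!: mult_left_mono quantum_channel_funpow_mat_unit_bound[OF pq])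
  finally show "cmod ((T ^^ k) X $$ (p, q)) \<le> (\<Sum>i<d. \<Sum>j<d. cmod (X $$ (i, j)) * ?\<beta> i j)" .
qed

end

lemma tensor_map_kron_eigenvector: assumes T: "lin_map d T" and S: "lin_map d' S"
  and A: "A \<in> carrier_mat d d" "T A = c \<cdot>\<^sub>m A" and B: "B \<in> carrier_mat d' d'" "S B = e \<cdot>\<^sub>m B"
  shows "tensor_map d d' T S (mat_kron A B) = (c * e) \<cdot>\<^sub>m mat_kron A B"
proof -
  have "tensor_map d d' T S (mat_kron A B) = mat_kron (c \<cdot>\<^sub>m A) (e \<cdot>\<^sub>m B)"
    using tensor_map_kron[OF T S A(1) B(1)] A B by simp
  also have "\<dots> = c \<cdot>\<^sub>m mat_kron A (e \<cdot>\<^sub>m B)"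
    by (rule mat_kron_smult_left[OF A(1) smult_carrier_mat[OF B(1)]])
  also have "\<dots> = c \<cdot>\<^sub>m (e \<cdot>\<^sub>m mat_kron A B)" by (simp add: mat_kron_smult_right[OF A(1) B(1)])
  also have "\<dots> = (c * e) \<cdot>\<^sub>m mat_kron A B" by (intro eq_matI) auto
  finally show ?thesis .
qed

section \<open>Tensor products of quantum channels\<close>

lemma mult_eq_1_iff_le_1: fixes x y :: real assumes "0 \<le> x" "x \<le> 1" "0 \<le> y" "y \<le> 1"
  shows "x * y = 1 \<longleftrightarrow> x = 1 \<and> y = 1"
proof
  assume "x * y = 1"
  moreover have "x * y \<le> x" "x * y \<le> y"
    using mult_left_le[OF assms(4,1)] mult_left_le[OF assms(2,3)] by (simp_all add: mult.commute)
  ultimately show "x = 1 \<and> y = 1" using assms by linarith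
qed simp

context
  fixes d d' T S assumes T: "quantum_channel d T" and S: "quantum_channel d' S"
begin

lemma peripheral_projection_tensor_map_kron:
  assumes A: "A \<in> gen_eigenspace d T c" and B: "B \<in> gen_eigenspace d' S e"
  shows "peripheral_projection (d * d') (tensor_map d d' T S) (mat_kron A B)
       = tensor_map d d' (peripheral_projection d T) (peripheral_projection d' S) (mat_kron A B)"
proof -
  have LT: "lin_map d T" and LS: "lin_map d' S"
    using quantum_channel_lin_map[OF T] quantum_channel_lin_map[OF S] .
  have AC: "A \<in> carrier_mat d d" and BC: "B \<in> carrier_mat d' d'"
    using A B by (auto dest: gen_eigenspace_carrier)
  have "peripheral_projection (d * d') (tensor_map d d' T S) (mat_kron A B)
      = (if cmod (c * e) = 1 then mat_kron A B else 0\<^sub>m (d * d') (d * d'))"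
    by (rule peripheral_projection_gen_eigenspace[OF lin_map_tensor_map gen_eigenspace_kron[OF LT LS A B]])
  moreover have "tensor_map d d' (peripheral_projection d T) (peripheral_projection d' S) (mat_kron A B)
      = mat_kron (if cmod c = 1 then A else 0\<^sub>m d d) (if cmod e = 1 then B else 0\<^sub>m d' d')"
    using tensor_map_kron[OF peripheral_projection_lin_map[OF LT] peripheral_projection_lin_map[OF LS] AC BC]
      peripheral_projection_gen_eigenspace[OF LT A] peripheral_projection_gen_eigenspace[OF LS B] by simp
  moreover have "cmod (c * e) = 1 \<longleftrightarrow> cmod c = 1 \<and> cmod e = 1" if "A \<noteq> 0\<^sub>m d d" "B \<noteq> 0\<^sub>m d' d'"
    using gen_eigenspace_norm_le_1[OF LT quantum_channel_power_bounded[OF T] A that(1)]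
      gen_eigenspace_norm_le_1[OF LS quantum_channel_power_bounded[OF S] B that(2)]
    by (simp add: norm_mult mult_eq_1_iff_le_1)
  ultimately show ?thesis
    using mat_kron_zero_left[OF BC] mat_kron_zero_right[OF AC] mat_kron_zero_left[of "0\<^sub>m d' d'" d' d]
    by (cases "A = 0\<^sub>m d d \<or> B = 0\<^sub>m d' d'") auto
qed

text \<open>Both sides are linear and agree on Kronecker products of generalized eigenvectors,
  which span the whole matrix space.\<close>

lemma peripheral_projection_tensor_map: assumes X: "X \<in> carrier_mat (d * d') (d * d')"
  shows "peripheral_projection (d * d') (tensor_map d d' T S) X
       = tensor_map d d' (peripheral_projection d T) (peripheral_projection d' S) X"
proof -
  have LT: "lin_map d T" and LS: "lin_map d' S"
    using quantum_channel_lin_map[OF T] quantum_channel_lin_map[OF S] .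
  let ?U = "\<Union>c. gen_eigenspace d T c" and ?V = "\<Union>e. gen_eigenspace d' S e"
  have UV: "?U \<subseteq> carrier_mat d d" "?V \<subseteq> carrier_mat d' d'" by (auto dest: gen_eigenspace_carrier)
  have span: "X \<in> tensor_subspace d d' ?U ?V"
    using carrier_subset_tensor_subspace[OF UV carrier_subset_span_gen_eigenspaces[OF LT]
        carrier_subset_span_gen_eigenspaces[OF LS]] X by blast
  have kron: "{mat_kron A B | A B. A \<in> ?U \<and> B \<in> ?V} \<subseteq> carrier_mat (d * d') (d * d')"
    using UV by (auto intro!: mat_kron_carrier)
  have agree: "peripheral_projection (d * d') (tensor_map d d' T S) Z
      = tensor_map d d' (peripheral_projection d T) (peripheral_projection d' S) Z"
    if Z: "Z \<in> {mat_kron A B | A B. A \<in> ?U \<and> B \<in> ?V}" for Z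
  proof -
    obtain A B c e where "Z = mat_kron A B" "A \<in> gen_eigenspace d T c" "B \<in> gen_eigenspace d' S e"
      using Z by blast
    thus ?thesis using peripheral_projection_tensor_map_kron by simp
  qed
  show ?thesis
    by (rule lin_map_eq_on_span[OF peripheral_projection_lin_map[OF lin_map_tensor_map] lin_map_tensor_map
          kron agree span[unfolded tensor_subspace_def]])
qed

lemma peripheral_subspace_tensor_map_subset:
  "peripheral_subspace (d * d') (tensor_map d d' T S)
     \<subseteq> tensor_subspace d d' (peripheral_subspace d T) (peripheral_subspace d' S)"
  unfolding peripheral_subspace_def[of "d * d'"]
proof (intro mat_span_minimal subsetI)
  have LT: "lin_map d T" and LS: "lin_map d' S"
    using quantum_channel_lin_map[OF T] quantum_channel_lin_map[OF S] .
  let ?P = "peripheral_projection"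
  show "mat_subspace (d * d') (tensor_subspace d d' (peripheral_subspace d T) (peripheral_subspace d' S))"
    unfolding tensor_subspace_def by (rule mat_subspace_span)
  have "?P d T ` carrier_mat d d \<subseteq> peripheral_subspace d T"
    using peripheral_projection_image[OF LT]
    unfolding peripheral_subspace_eq_peripheral_span[OF LT quantum_channel_power_bounded[OF T]] by blast
  moreover have "?P d' S ` carrier_mat d' d' \<subseteq> peripheral_subspace d' S"
    using peripheral_projection_image[OF LS]
    unfolding peripheral_subspace_eq_peripheral_span[OF LS quantum_channel_power_bounded[OF S]] by blast
  ultimately have mono: "tensor_subspace d d' (?P d T ` carrier_mat d d) (?P d' S ` carrier_mat d' d')
      \<subseteq> tensor_subspace d d' (peripheral_subspace d T) (peripheral_subspace d' S)"
    by (rule tensor_subspace_mono)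
  fix Y assume "Y \<in> {X \<in> carrier_mat (d * d') (d * d'). \<exists>c. cmod c = 1 \<and> tensor_map d d' T S X = c \<cdot>\<^sub>m X}"
  then obtain c where Y: "Y \<in> carrier_mat (d * d') (d * d')" "cmod c = 1" "tensor_map d d' T S Y = c \<cdot>\<^sub>m Y"
    by blast
  have "Y = ?P (d * d') (tensor_map d d' T S) Y"
    using peripheral_projection_gen_eigenspace[OF lin_map_tensor_map
        eigenvector_in_gen_eigenspace[OF lin_map_tensor_map Y(1,3)]] Y(2) by simp
  also have "\<dots> = tensor_map d d' (?P d T) (?P d' S) Y" by (rule peripheral_projection_tensor_map[OF Y(1)])
  also have "\<dots> \<in> tensor_subspace d d' (?P d T ` carrier_mat d d) (?P d' S ` carrier_mat d' d')"
    by (rule tensor_map_mem_tensor_subspace[OF peripheral_projection_lin_map[OF LT]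
          peripheral_projection_lin_map[OF LS] Y(1)])
  finally show "Y \<in> tensor_subspace d d' (peripheral_subspace d T) (peripheral_subspace d' S)"
    using mono by blast
qed

lemma tensor_subspace_peripheral_subset:
  "tensor_subspace d d' (peripheral_subspace d T) (peripheral_subspace d' S)
     \<subseteq> peripheral_subspace (d * d') (tensor_map d d' T S)"
proof -
  have LT: "lin_map d T" and LS: "lin_map d' S"
    using quantum_channel_lin_map[OF T] quantum_channel_lin_map[OF S] .
  let ?ET = "{X \<in> carrier_mat d d. \<exists>c. cmod c = 1 \<and> T X = c \<cdot>\<^sub>m X}"
  let ?ES = "{X \<in> carrier_mat d' d'. \<exists>c. cmod c = 1 \<and> S X = c \<cdot>\<^sub>m X}"
  let ?W = "peripheral_subspace (d * d') (tensor_map d d' T S)"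
  have "tensor_subspace d d' ?ET ?ES \<subseteq> ?W"
    unfolding tensor_subspace_def peripheral_subspace_def[of "d * d'"]
  proof (rule mat_span_mono, safe)
    fix A B c e assume A: "A \<in> carrier_mat d d" "cmod c = 1" "T A = c \<cdot>\<^sub>m A"
      and B: "B \<in> carrier_mat d' d'" "cmod e = 1" "S B = e \<cdot>\<^sub>m B"
    show "mat_kron A B \<in> carrier_mat (d * d') (d * d')" by (rule mat_kron_carrier[OF A(1) B(1)])
    show "\<exists>\<mu>. cmod \<mu> = 1 \<and> tensor_map d d' T S (mat_kron A B) = \<mu> \<cdot>\<^sub>m mat_kron A B"
      using tensor_map_kron_eigenvector[OF LT LS A(1,3) B(1,3)] A(2) B(2)
      by (intro exI[of _ "c * e"]) (simp add: norm_mult)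
  qed
  moreover have "mat_kron A B \<in> tensor_subspace d d' ?ET ?ES"
    if "A \<in> peripheral_subspace d T" "B \<in> peripheral_subspace d' S" for A B
    using that unfolding peripheral_subspace_def by (intro mat_kron_mem_tensor_subspace) auto
  ultimately show ?thesis
    unfolding tensor_subspace_def[of d d' "peripheral_subspace d T"] peripheral_subspace_def[of "d * d'"]
    by (intro mat_span_minimal mat_subspace_span) blast
qed

lemma peripheral_subspace_tensor_map:
  "peripheral_subspace (d * d') (tensor_map d d' T S)
     = tensor_subspace d d' (peripheral_subspace d T) (peripheral_subspace d' S)"
  by (rule equalityI[OF peripheral_subspace_tensor_map_subset tensor_subspace_peripheral_subset])

end

theorem lemma1:
  fixes T S :: "complex mat \<Rightarrow> complex mat" and d d' :: nat
  assumes "0 < d" and "0 < d'"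
    and "quantum_channel d T" and "quantum_channel d' S"
  shows "(\<forall>X \<in> carrier_mat (d * d') (d * d').
            peripheral_projection (d * d') (tensor_map d d' T S) X
          = tensor_map d d' (peripheral_projection d T) (peripheral_projection d' S) X)
       \<and> peripheral_subspace (d * d') (tensor_map d d' T S)
          = tensor_subspace d d' (peripheral_subspace d T) (peripheral_subspace d' S)"
proof (intro conjI ballI)
  fix X :: "complex mat" assume "X \<in> carrier_mat (d * d') (d * d')"
  thus "peripheral_projection (d * d') (tensor_map d d' T S) X
      = tensor_map d d' (peripheral_projection d T) (peripheral_projection d' S) X"
    by (rule peripheral_projection_tensor_map[OF assms(3,4)])
qed (rule peripheral_subspace_tensor_map[OF assms(3,4)])

end
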